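(* Let $M$ be a monoidal category and $C$ an $M$-actegory, and let $l\in\mathit{Optic}_{C,C}((x,x),(y,y))$ with corresponding 2-cell $\theta_l:R_x\otimes L_x\Rightarrow R_y\otimes L_y$. The following are equivalent: (i) $\theta_l;\varepsilon_y=\varepsilon_x$ as 2-cells $R_x\otimes L_x\Rightarrow C(-,=)$, and the composite $R_x\otimes L_x\xrightarrow{\theta_l}R_y\otimes L_y\cong R_y\otimes M(-,=)\otimes L_y\xrightarrow{R_y\otimes\eta_y\otimes L_y}R_y\otimes L_y\otimes R_y\otimes L_y$ equals the composite $R_x\otimes L_x\cong R_x\otimes M(-,=)\otimes L_x\xrightarrow{R_x\otimes\eta_x\otimes L_x}R_x\otimes L_x\otimes R_x\otimes L_x\xrightarrow{\theta_l\otimes\theta_l}R_y\otimes L_y\otimes R_y\otimes L_y$; (ii) $\mathrm{outside}(l)=\mathrm{id}_x$ and $\mathrm{once}(l)=\mathrm{twice}(l)$, where, for $l=\langle\alpha\mid\beta\rangle_m$, $\mathrm{outside}(l)=\alpha;\beta\in C(x,x)$, $\mathrm{once}(l)=\langle\alpha\mid\mathrm{id}_{m\odot y}\mid\beta\rangle_{m,m}$ and $\mathrm{twice}(l)=\langle\alpha\mid\beta;\alpha\mid\beta\rangle_{m,m}$ in $\mathit{Optic}^2(x,y)$.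
   Context: $(M,\otimes,I,\lambda,a)$ is a monoidal category; an $M$-actegory is a category $C$ with a functor $\odot:M\times C\to C$ and coherent natural isomorphisms $\lambda_x:I\odot x\to x$, $a_{m,n,x}:(m\otimes n)\odot x\to m\odot(n\odot x)$; $M$ is an $M$-actegory via $\otimes$. Composition is diagrammatic ($f;g$ = $f$ then $g$). $\mathit{Optic}_{C,C}((x,u),(y,v))=\int^{m\in M}C(x,m\odot y)\times C(m\odot v,u)$, elements $\langle\alpha\mid\beta\rangle_m$ modulo $\langle\alpha;(f\odot y)\mid\beta\rangle_m=\langle\alpha\mid(f\odot v);\beta\rangle_n$ for $f:n\to m$. $\mathit{Optic}^2(x,y)=\int^{m_1,m_2\in M}C(x,m_1\odot y)\times C(m_1\odot y,m_2\odot y)\times C(m_2\odot y,x)$, elements written $\langle\alpha\mid\gamma\mid\beta\rangle_{m_1,m_2}$ (quotiented by the coend relations in $m_1$ and $m_2$). $\mathrm{outside}$, $\mathrm{once}$, $\mathrm{twice}$ are well defined on equivalence classes. $\mathit{Tamb}$: the bicategory of $M$-actegories whose hom-category $\mathit{Tamb}_{C,D}$ consists of functors $C^{op}\times D\to\mathrm{Set}$ with compatible strengths $P(c,d)\to P(m\odot c,m\odot d)$ and strength-preserving natural transformations (2-cells); identities are hom-profunctors; composition $(P\otimes Q)(c,e)=\int^d P(c,d)\times Q(d,e)$. For $x\in C$: $R_x\in\mathit{Tamb}_{C,M}$ is $(c,n)\mapsto C(c,n\odot x)$, $L_x\in\mathit{Tamb}_{M,C}$ is $(n,c)\mapsto C(n\odot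 x,c)$ (strengths induced by the action and associator). $\varepsilon_x:R_x\otimes L_x\Rightarrow C(-,=)$ is composition $\int^nC(c,n\odot x)\times C(n\odot x,c')\to C(c,c')$; $\eta_x:M(-,=)\Rightarrow L_x\otimes R_x$ sends $h:k\to k'$ to $h\odot x\in C(k\odot x,k'\odot x)\cong(L_x\otimes R_x)(k,k')$. An optic $l:(x,x)\to(y,y)$ corresponds to the unique 2-cell $\theta_l:R_x\otimes L_x\Rightarrow R_y\otimes L_y$ whose $(x,x)$-component sends the identity optic $\langle\lambda^{-1}_x\mid\lambda_x\rangle_I\in(R_x\otimes L_x)(x,x)$ to $l$. Bicategorical associators/unitors are suppressed. *)

theory Defs
  imports Main
begin

section \<open>Categories (composition is diagrammatic: ccomp C f g = f;g)\<close>

record ('o,'a) cat =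
  cOb :: "'o set"
  cAr :: "'a set"
  cdom :: "'a \<Rightarrow> 'o"
  ccod :: "'a \<Rightarrow> 'o"
  cid :: "'o \<Rightarrow> 'a"
  ccomp :: "'a \<Rightarrow> 'a \<Rightarrow> 'a"

definition hom :: "('o,'a) cat \<Rightarrow> 'o \<Rightarrow> 'o \<Rightarrow> 'a set" where
  "hom C a b = {f \<in> cAr C. cdom C f = a \<and> ccod C f = b}"

definition category :: "('o,'a) cat \<Rightarrow> bool" where
  "category C \<longleftrightarrow>
     (\<forall>f\<in>cAr C. cdom C f \<in> cOb C \<and> ccod C f \<in> cOb C) \<and>
     (\<forall>a\<in>cOb C. cid C a \<in> hom C a a) \<and>
     (\<forall>a b c f g. f \<in> hom C a b \<longrightarrow> g \<in> hom C b c \<longrightarrow> ccomp C f g \<in> hom C a c) \<and>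
     (\<forall>a b f. f \<in> hom C a b \<longrightarrow> ccomp C (cid C a) f = f \<and> ccomp C f (cid C b) = f) \<and>
     (\<forall>a b c d f g h. f \<in> hom C a b \<longrightarrow> g \<in> hom C b c \<longrightarrow> h \<in> hom C c d \<longrightarrow>
        ccomp C (ccomp C f g) h = ccomp C f (ccomp C g h))"

definition is_iso :: "('o,'a) cat \<Rightarrow> 'a \<Rightarrow> 'o \<Rightarrow> 'o \<Rightarrow> bool" where
  "is_iso C f a b \<longleftrightarrow> f \<in> hom C a b \<and>
     (\<exists>g\<in>hom C b a. ccomp C f g = cid C a \<and> ccomp C g f = cid C b)"

definition cinv :: "('o,'a) cat \<Rightarrow> 'a \<Rightarrow> 'a" where
  "cinv C f = (SOME g. g \<in> hom C (ccod C f) (cdom C f) \<and>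
      ccomp C f g = cid C (cdom C f) \<and> ccomp C g f = cid C (ccod C f))"

definition bifunctor :: "('o1,'a1) cat \<Rightarrow> ('o2,'a2) cat \<Rightarrow> ('o3,'a3) cat \<Rightarrow>
    ('o1 \<Rightarrow> 'o2 \<Rightarrow> 'o3) \<Rightarrow> ('a1 \<Rightarrow> 'a2 \<Rightarrow> 'a3) \<Rightarrow> bool" where
  "bifunctor A B D FO FA \<longleftrightarrow>
     (\<forall>a\<in>cOb A. \<forall>b\<in>cOb B. FO a b \<in> cOb D) \<and>
     (\<forall>a a' b b' f g. f \<in> hom A a a' \<longrightarrow> g \<in> hom B b b' \<longrightarrow> FA f g \<in> hom D (FO a b) (FO a' b')) \<and>
     (\<forall>a\<in>cOb A. \<forall>b\<in>cOb B. FA (cid A a) (cid B b) = cid D (FO a b)) \<and>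
     (\<forall>a a' a'' b b' b'' f f' g g'. f \<in> hom A a a' \<longrightarrow> f' \<in> hom A a' a'' \<longrightarrow>
        g \<in> hom B b b' \<longrightarrow> g' \<in> hom B b' b'' \<longrightarrow>
        FA (ccomp A f f') (ccomp B g g') = ccomp D (FA f g) (FA f' g'))"

record ('mo,'m,'o,'a) actg =
  Mcat :: "('mo,'m) cat"
  tenO :: "'mo \<Rightarrow> 'mo \<Rightarrow> 'mo"
  tenA :: "'m \<Rightarrow> 'm \<Rightarrow> 'm"
  munit :: "'mo"
  mlam :: "'mo \<Rightarrow> 'm"
  mrho :: "'mo \<Rightarrow> 'm"
  mass :: "'mo \<Rightarrow> 'mo \<Rightarrow> 'mo \<Rightarrow> 'm" \<comment> \<open>(m \<otimes> n) \<otimes> p \<rightarrow> m \<otimes> (n \<otimes> p)\<close>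
  Ccat :: "('o,'a) cat"
  actO :: "'mo \<Rightarrow> 'o \<Rightarrow> 'o"
  actA :: "'m \<Rightarrow> 'a \<Rightarrow> 'a"
  alam :: "'o \<Rightarrow> 'a"
  aass :: "'mo \<Rightarrow> 'mo \<Rightarrow> 'o \<Rightarrow> 'a" \<comment> \<open>a_{m,n,x} : (m \<otimes> n) \<odot> x \<rightarrow> m \<odot> (n \<odot> x)\<close>

definition monoidal :: "('mo,'m,'o,'a) actg \<Rightarrow> bool" where
  "monoidal A \<longleftrightarrow> (let M = Mcat A; t = tenO A; T = tenA A; I = munit A in
     category M \<and> bifunctor M M M t T \<and> I \<in> cOb M \<and>
     (\<forall>m\<in>cOb M. is_iso M (mlam A m) (t I m) m \<and> is_iso M (mrho A m) (t m I) m) \<and>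
     (\<forall>m\<in>cOb M. \<forall>n\<in>cOb M. \<forall>p\<in>cOb M.
        is_iso M (mass A m n p) (t (t m n) p) (t m (t n p))) \<and>
     (\<forall>a b f. f \<in> hom M a b \<longrightarrow>
        ccomp M (T (cid M I) f) (mlam A b) = ccomp M (mlam A a) f \<and>
        ccomp M (T f (cid M I)) (mrho A b) = ccomp M (mrho A a) f) \<and>
     (\<forall>a a' b b' c c' f g h. f \<in> hom M a a' \<longrightarrow> g \<in> hom M b b' \<longrightarrow> h \<in> hom M c c' \<longrightarrow>
        ccomp M (T (T f g) h) (mass A a' b' c') = ccomp M (mass A a b c) (T f (T g h))) \<and>
     (\<forall>m\<in>cOb M. \<forall>n\<in>cOb M. \<forall>p\<in>cOb M. \<forall>q\<in>cOb M.
        ccomp M (mass A (t m n) p q) (mass A m n (t p q)) =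
        ccomp M (ccomp M (T (mass A m n p) (cid M q)) (mass A m (t n p) q))
                (T (cid M m) (mass A n p q))) \<and>
     (\<forall>m\<in>cOb M. \<forall>n\<in>cOb M.
        ccomp M (mass A m I n) (T (cid M m) (mlam A n)) = T (mrho A m) (cid M n)))"

definition actegory :: "('mo,'m,'o,'a) actg \<Rightarrow> bool" where
  "actegory A \<longleftrightarrow> monoidal A \<and> (let M = Mcat A; C = Ccat A; t = tenO A; T = tenA A;
       I = munit A; ac = actO A; AC = actA A in
     category C \<and> bifunctor M C C ac AC \<and>
     (\<forall>x\<in>cOb C. is_iso C (alam A x) (ac I x) x) \<and>
     (\<forall>m\<in>cOb M. \<forall>n\<in>cOb M. \<forall>x\<in>cOb C. is_iso C (aass A m n x) (ac (t m n) x) (ac m (ac n x))) \<and>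
     (\<forall>x y f. f \<in> hom C x y \<longrightarrow> ccomp C (AC (cid M I) f) (alam A y) = ccomp C (alam A x) f) \<and>
     (\<forall>m m' n n' x y h k f. h \<in> hom M m m' \<longrightarrow> k \<in> hom M n n' \<longrightarrow> f \<in> hom C x y \<longrightarrow>
        ccomp C (AC (T h k) f) (aass A m' n' y) = ccomp C (aass A m n x) (AC h (AC k f))) \<and>
     (\<forall>m\<in>cOb M. \<forall>n\<in>cOb M. \<forall>p\<in>cOb M. \<forall>x\<in>cOb C.
        ccomp C (aass A (t m n) p x) (aass A m n (ac p x)) =
        ccomp C (ccomp C (AC (mass A m n p) (cid C x)) (aass A m (t n p) x))
                (AC (cid M m) (aass A n p x))) \<and>
     (\<forall>m\<in>cOb M. \<forall>x\<in>cOb C.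
        ccomp C (aass A m I x) (AC (cid M m) (alam A x)) = AC (mrho A m) (cid C x)) \<and>
     (\<forall>m\<in>cOb M. \<forall>x\<in>cOb C.
        ccomp C (aass A I m x) (alam A (ac m x)) = AC (mlam A m) (cid C x)))"

section \<open>Coends as quotients of representatives\<close>

definition genrel :: "'t set \<Rightarrow> ('t \<times> 't) set \<Rightarrow> ('t \<times> 't) set" where
  "genrel R S = (let S' = S \<inter> (R \<times> R) in ((S' \<union> S'\<inverse>)\<^sup>*) \<inter> (R \<times> R))"

definition cls :: "('t \<times> 't) set \<Rightarrow> 't \<Rightarrow> 't set" where
  "cls E t = E `` {t}"

subsection \<open>Optics Optic((x,u),(y,v)) = \<integral>^m C(x, m\<odot>y) \<times> C(m\<odot>v, u)\<close>

definition opt_reps :: "('mo,'m,'o,'a) actg \<Rightarrow> 'o \<Rightarrow> 'o \<Rightarrow> 'o \<Rightarrow> 'o \<Rightarrow> ('mo \<times> 'a \<times> 'a) set" where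
  "opt_reps A x u y v = {(m,\<alpha>,\<beta>). m \<in> cOb (Mcat A) \<and> \<alpha> \<in> hom (Ccat A) x (actO A m y)
      \<and> \<beta> \<in> hom (Ccat A) (actO A m v) u}"

definition opt_step :: "('mo,'m,'o,'a) actg \<Rightarrow> 'o \<Rightarrow> 'o \<Rightarrow> 'o \<Rightarrow> 'o \<Rightarrow> (('mo \<times> 'a \<times> 'a) \<times> ('mo \<times> 'a \<times> 'a)) set" where
  "opt_step A x u y v = {((m, ccomp (Ccat A) \<alpha> (actA A h (cid (Ccat A) y)), \<beta>),
                          (n, \<alpha>, ccomp (Ccat A) (actA A h (cid (Ccat A) v)) \<beta>)) | m n h \<alpha> \<beta>.
      h \<in> hom (Mcat A) n m \<and> \<alpha> \<in> hom (Ccat A) x (actO A n y) \<and> \<beta> \<in> hom (Ccat A) (actO A m v) u}"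

definition opt_rel where
  "opt_rel A x u y v = genrel (opt_reps A x u y v) (opt_step A x u y v)"

definition Optic :: "('mo,'m,'o,'a) actg \<Rightarrow> 'o \<Rightarrow> 'o \<Rightarrow> 'o \<Rightarrow> 'o \<Rightarrow> ('mo \<times> 'a \<times> 'a) set set" where
  "Optic A x u y v = opt_reps A x u y v // opt_rel A x u y v"

text \<open>outside(<\<alpha>|\<beta>>) = \<alpha>;\<beta>  (well defined on classes); also the counit \<epsilon>.\<close>
definition outside :: "('mo,'m,'o,'a) actg \<Rightarrow> ('mo \<times> 'a \<times> 'a) set \<Rightarrow> 'a" where
  "outside A W = (case (SOME t. t \<in> W) of (m,\<alpha>,\<beta>) \<Rightarrow> ccomp (Ccat A) \<alpha> \<beta>)"

definition opt2_reps :: "('mo,'m,'o,'a) actg \<Rightarrow> 'o \<Rightarrow> 'o \<Rightarrow> ('mo \<times> 'mo \<times> 'a \<times> 'a \<times> 'a) set" where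
  "opt2_reps A x y = {(m1,m2,\<alpha>,\<gamma>,\<beta>). m1 \<in> cOb (Mcat A) \<and> m2 \<in> cOb (Mcat A) \<and>
      \<alpha> \<in> hom (Ccat A) x (actO A m1 y) \<and> \<gamma> \<in> hom (Ccat A) (actO A m1 y) (actO A m2 y) \<and>
      \<beta> \<in> hom (Ccat A) (actO A m2 y) x}"

definition opt2_step where
  "opt2_step A x y =
    {((m1, m2, ccomp (Ccat A) \<alpha> (actA A h (cid (Ccat A) y)), \<gamma>, \<beta>),
      (n1, m2, \<alpha>, ccomp (Ccat A) (actA A h (cid (Ccat A) y)) \<gamma>, \<beta>)) | m1 n1 m2 h \<alpha> \<gamma> \<beta>.
      h \<in> hom (Mcat A) n1 m1} \<union>
    {((m1, m2, \<alpha>, ccomp (Ccat A) \<gamma> (actA A h (cid (Ccat A) y)), \<beta>),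
      (m1, n2, \<alpha>, \<gamma>, ccomp (Ccat A) (actA A h (cid (Ccat A) y)) \<beta>)) | m1 m2 n2 h \<alpha> \<gamma> \<beta>.
      h \<in> hom (Mcat A) n2 m2}"

definition opt2_rel where
  "opt2_rel A x y = genrel (opt2_reps A x y) (opt2_step A x y)"

definition Optic2 where
  "Optic2 A x y = opt2_reps A x y // opt2_rel A x y"

definition once :: "('mo,'m,'o,'a) actg \<Rightarrow> 'o \<Rightarrow> 'o \<Rightarrow> ('mo \<times> 'a \<times> 'a) set \<Rightarrow> ('mo \<times> 'mo \<times> 'a \<times> 'a \<times> 'a) set" where
  "once A x y l = (\<Union>(m,\<alpha>,\<beta>)\<in>l. cls (opt2_rel A x y) (m, m, \<alpha>, cid (Ccat A) (actO A m y), \<beta>))"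

definition twice :: "('mo,'m,'o,'a) actg \<Rightarrow> 'o \<Rightarrow> 'o \<Rightarrow> ('mo \<times> 'a \<times> 'a) set \<Rightarrow> ('mo \<times> 'mo \<times> 'a \<times> 'a \<times> 'a) set" where
  "twice A x y l = (\<Union>(m,\<alpha>,\<beta>)\<in>l. cls (opt2_rel A x y) (m, m, \<alpha>, ccomp (Ccat A) \<beta> \<alpha>, \<beta>))"

definition idopt :: "('mo,'m,'o,'a) actg \<Rightarrow> 'o \<Rightarrow> ('mo \<times> 'a \<times> 'a) set" where
  "idopt A x = cls (opt_rel A x x x x) (munit A, cinv (Ccat A) (alam A x), alam A x)"

subsection \<open>The Tambara module R_x \<otimes> L_x, with (R_x \<otimes> L_x)(c,c') = Optic((c,c'),(x,x))\<close>

definition RL where "RL A x c c' = Optic A c c' x x"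

text \<open>Profunctor action (p : d \<rightarrow> c contravariantly, q : c' \<rightarrow> d').\<close>
definition rl_dimap :: "('mo,'m,'o,'a) actg \<Rightarrow> 'o \<Rightarrow> 'o \<Rightarrow> 'o \<Rightarrow> 'a \<Rightarrow> 'a \<Rightarrow> ('mo \<times> 'a \<times> 'a) set \<Rightarrow> ('mo \<times> 'a \<times> 'a) set" where
  "rl_dimap A x d d' p q W = (\<Union>(n,f,g)\<in>W. cls (opt_rel A d d' x x) (n, ccomp (Ccat A) p f, ccomp (Ccat A) g q))"

definition rl_str :: "('mo,'m,'o,'a) actg \<Rightarrow> 'o \<Rightarrow> 'mo \<Rightarrow> 'o \<Rightarrow> 'o \<Rightarrow> ('mo \<times> 'a \<times> 'a) set \<Rightarrow> ('mo \<times> 'a \<times> 'a) set" where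
  "rl_str A x m c c' W = (\<Union>(n,f,g)\<in>W. cls (opt_rel A (actO A m c) (actO A m c') x x)
      (tenO A m n, ccomp (Ccat A) (actA A (cid (Mcat A) m) f) (cinv (Ccat A) (aass A m n x)),
                   ccomp (Ccat A) (aass A m n x) (actA A (cid (Mcat A) m) g)))"

text \<open>2-cells R_x \<otimes> L_x \<Rightarrow> R_y \<otimes> L_y of Tamb_{C,C}: strength-preserving natural transformations.\<close>
definition two_cell :: "('mo,'m,'o,'a) actg \<Rightarrow> 'o \<Rightarrow> 'o \<Rightarrow>
    ('o \<Rightarrow> 'o \<Rightarrow> ('mo \<times> 'a \<times> 'a) set \<Rightarrow> ('mo \<times> 'a \<times> 'a) set) \<Rightarrow> bool" where
  "two_cell A x y \<theta> \<longleftrightarrow>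
     (\<forall>c\<in>cOb (Ccat A). \<forall>c'\<in>cOb (Ccat A). \<forall>W\<in>RL A x c c'. \<theta> c c' W \<in> RL A y c c') \<and>
     (\<forall>c c' d d' p q W. c \<in> cOb (Ccat A) \<longrightarrow> c' \<in> cOb (Ccat A) \<longrightarrow> d \<in> cOb (Ccat A) \<longrightarrow>
        d' \<in> cOb (Ccat A) \<longrightarrow> p \<in> hom (Ccat A) d c \<longrightarrow> q \<in> hom (Ccat A) c' d' \<longrightarrow> W \<in> RL A x c c' \<longrightarrow>
        \<theta> d d' (rl_dimap A x d d' p q W) = rl_dimap A y d d' p q (\<theta> c c' W)) \<and>
     (\<forall>m c c' W. m \<in> cOb (Mcat A) \<longrightarrow> c \<in> cOb (Ccat A) \<longrightarrow> c' \<in> cOb (Ccat A) \<longrightarrow> W \<in> RL A x c c' \<longrightarrow>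
        \<theta> (actO A m c) (actO A m c') (rl_str A x m c c' W) = rl_str A y m c c' (\<theta> c c' W))"

subsection \<open>R_x \<otimes> L_x \<otimes> R_x \<otimes> L_x (bicategorical associators suppressed: a flat coend
  over n1 \<in> M, d \<in> C, n2 \<in> M)\<close>

type_synonym ('mo,'a,'o) rep4 = "'mo \<times> 'a \<times> 'o \<times> 'a \<times> 'mo \<times> 'a \<times> 'a"

definition rep4 :: "('mo,'m,'o,'a) actg \<Rightarrow> 'o \<Rightarrow> 'o \<Rightarrow> 'o \<Rightarrow> ('mo,'a,'o) rep4 set" where
  "rep4 A x c c' = {(n1,f,d,g,n2,h,k). n1 \<in> cOb (Mcat A) \<and> f \<in> hom (Ccat A) c (actO A n1 x) \<and>
     d \<in> cOb (Ccat A) \<and> g \<in> hom (Ccat A) (actO A n1 x) d \<and> n2 \<in> cOb (Mcat A) \<and>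
     h \<in> hom (Ccat A) d (actO A n2 x) \<and> k \<in> hom (Ccat A) (actO A n2 x) c'}"

definition step4 :: "('mo,'m,'o,'a) actg \<Rightarrow> 'o \<Rightarrow> (('mo,'a,'o) rep4 \<times> ('mo,'a,'o) rep4) set" where
  "step4 A x =
    {((m1, ccomp (Ccat A) f (actA A u (cid (Ccat A) x)), d, g, n2, h, k),
      (n1, f, d, ccomp (Ccat A) (actA A u (cid (Ccat A) x)) g, n2, h, k)) | m1 n1 u f d g n2 h k.
       u \<in> hom (Mcat A) n1 m1} \<union>
    {((n1, f, d', ccomp (Ccat A) g p, n2, h, k),
      (n1, f, d, g, n2, ccomp (Ccat A) p h, k)) | n1 f d d' g p n2 h k.
       p \<in> hom (Ccat A) d d'} \<union>
    {((n1, f, d, g, m2, ccomp (Ccat A) h (actA A u (cid (Ccat A) x)), k),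
      (n1, f, d, g, n2, h, ccomp (Ccat A) (actA A u (cid (Ccat A) x)) k)) | n1 f d g m2 n2 u h k.
       u \<in> hom (Mcat A) n2 m2}"

definition rel4 where "rel4 A x c c' = genrel (rep4 A x c c') (step4 A x)"

definition RLRL where "RLRL A x c c' = rep4 A x c c' // rel4 A x c c'"

text \<open>R_x \<otimes> L_x \<cong> R_x \<otimes> M(-,=) \<otimes> L_x \<rightarrow> R_x \<otimes> L_x \<otimes> R_x \<otimes> L_x  via  R_x \<otimes> \<eta>_x \<otimes> L_x;
  \<eta>_x(id_n) = id_n \<odot> x \<in> C(n\<odot>x, n\<odot>x) \<cong> (L_x \<otimes> R_x)(n,n).\<close>
definition dbl :: "('mo,'m,'o,'a) actg \<Rightarrow> 'o \<Rightarrow> 'o \<Rightarrow> 'o \<Rightarrow> ('mo \<times> 'a \<times> 'a) set \<Rightarrow> ('mo,'a,'o) rep4 set" where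
  "dbl A x c c' W = (\<Union>(n,f,g)\<in>W. cls (rel4 A x c c')
      (n, f, actO A n x, actA A (cid (Mcat A) n) (cid (Ccat A) x), n, cid (Ccat A) (actO A n x), g))"

definition glue :: "('mo,'m,'o,'a) actg \<Rightarrow> 'o \<Rightarrow> 'o \<Rightarrow> 'o \<Rightarrow> 'o \<Rightarrow>
    ('mo \<times> 'a \<times> 'a) set \<Rightarrow> ('mo \<times> 'a \<times> 'a) set \<Rightarrow> ('mo,'a,'o) rep4 set" where
  "glue A y c d c' U V = (\<Union>(n1,f,g)\<in>U. \<Union>(n2,h,k)\<in>V. cls (rel4 A y c c') (n1, f, d, g, n2, h, k))"

definition hcomp2 :: "('mo,'m,'o,'a) actg \<Rightarrow> 'o \<Rightarrow> 'o \<Rightarrow>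
    ('o \<Rightarrow> 'o \<Rightarrow> ('mo \<times> 'a \<times> 'a) set \<Rightarrow> ('mo \<times> 'a \<times> 'a) set) \<Rightarrow> 'o \<Rightarrow> 'o \<Rightarrow>
    ('mo,'a,'o) rep4 set \<Rightarrow> ('mo,'a,'o) rep4 set" where
  "hcomp2 A x y \<theta> c c' W = (\<Union>(n1,f,d,g,n2,h,k)\<in>W.
      glue A y c d c' (\<theta> c d (cls (opt_rel A c d x x) (n1, f, g)))
                      (\<theta> d c' (cls (opt_rel A d c' x x) (n2, h, k))))"

end

theory Submission
  imports Defs
begin

text \<open>
  By Yoneda, a two-cell \<open>\<theta>\<close> with \<open>\<theta>(id) = l = \<langle>\<alpha> | \<beta>\<rangle>\<^sub>m\<close> is determined by \<open>l\<close>: every optic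
  \<open>\<langle>f | g\<rangle>\<^sub>n\<close> is the identity optic acted on by \<open>n\<close> and re-indexed along \<open>f\<close> and \<open>g\<close>, so
  \<open>\<theta>\<langle>f | g\<rangle>\<^sub>n = \<langle>f;(n\<odot>\<alpha>);a\<^sup>-\<^sup>1 | a;(n\<odot>\<beta>);g\<rangle>\<^sub>n\<^sub>\<otimes>\<^sub>m\<close>.  With this formula both laws of (i) can be
  checked on representatives.  The counit law says \<open>f;(n\<odot>(\<alpha>;\<beta>));g = f;g\<close>, i.e. \<open>\<alpha>;\<beta> = id\<close>.
  For the comultiplication law, evaluating at the identity optic and composing the two middle
  components (the map \<open>R\<^sub>y \<otimes> \<epsilon>\<^sub>y \<otimes> L\<^sub>y\<close> into \<open>Optic\<^sup>2(x,y)\<close>) turns the two sides into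
  \<open>once(l)\<close> and \<open>twice(l)\<close>; conversely, acting by \<open>n\<close> and attaching \<open>f\<close> and \<open>g\<close> transports the
  relation \<open>once(l) = twice(l)\<close> in \<open>Optic\<^sup>2(x,y)\<close> to the two sides of the law at \<open>\<langle>f | g\<rangle>\<^sub>n\<close>.
\<close>

section \<open>Generated equivalence relations\<close>

lemma genrel_equiv: "equiv R (genrel R S)"
proof -
  let ?X = "(S \<inter> R \<times> R) \<union> (S \<inter> R \<times> R)\<inverse>"
  have s: "sym (?X\<^sup>*)" by (rule sym_rtrancl) (auto simp: sym_def)
  have t: "trans (?X\<^sup>*)" by (rule trans_rtrancl)
  have g: "genrel R S = ?X\<^sup>* \<inter> R \<times> R" unfolding genrel_def Let_def by simp
  show ?thesis unfolding g
  proof (rule equivI)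
    show "?X\<^sup>* \<inter> R \<times> R \<subseteq> R \<times> R" by blast
    show "refl_on R (?X\<^sup>* \<inter> R \<times> R)" unfolding refl_on_def by blast
    show "sym (?X\<^sup>* \<inter> R \<times> R)" using s unfolding sym_def by blast
    show "trans (?X\<^sup>* \<inter> R \<times> R)" using t unfolding trans_def by blast
  qed
qed

lemma genrel_stepI: "a \<in> R \<Longrightarrow> b \<in> R \<Longrightarrow> (a, b) \<in> S \<Longrightarrow> (a, b) \<in> genrel R S"
  unfolding genrel_def Let_def by blast

lemma genrel_least:
  assumes Q_step: "\<And>a b. a \<in> R \<Longrightarrow> b \<in> R \<Longrightarrow> (a, b) \<in> S \<Longrightarrow> (a, b) \<in> Q"
    and Q_refl: "\<And>a. a \<in> R \<Longrightarrow> (a, a) \<in> Q" and "sym Q" and "trans Q"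
  shows "genrel R S \<subseteq> Q"
proof
  fix p assume "p \<in> genrel R S"
  then obtain a b where p: "p = (a, b)" and a: "a \<in> R"
    and ab: "(a, b) \<in> ((S \<inter> R \<times> R) \<union> (S \<inter> R \<times> R)\<inverse>)\<^sup>*"
    unfolding genrel_def Let_def by auto
  from ab have "b \<in> R \<and> (a, b) \<in> Q"
  proof (induction rule: rtrancl_induct)
    case base then show ?case using a Q_refl by simp
  next
    case (step b c)
    then have "(b, c) \<in> Q" using Q_step \<open>sym Q\<close> unfolding sym_def by blast
    with step show ?case using \<open>trans Q\<close> unfolding trans_def by blast
  qed
  then show "p \<in> Q" using p by simp
qed

lemma genrel_respects:
  assumes "\<And>a b. a \<in> R \<Longrightarrow> b \<in> R \<Longrightarrow> (a, b) \<in> S \<Longrightarrow> F a = F b"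
    and "(a, b) \<in> genrel R S"
  shows "F a = F b"
proof -
  have "genrel R S \<subseteq> {(a, b). F a = F b}"
    by (rule genrel_least) (auto simp: assms(1) sym_def trans_def)
  then show ?thesis using assms(2) by blast
qed

lemma genrel_map:
  assumes "\<And>a b. a \<in> R \<Longrightarrow> b \<in> R \<Longrightarrow> (a, b) \<in> S \<Longrightarrow> (F a, F b) \<in> genrel R' S'"
    and "\<And>a. a \<in> R \<Longrightarrow> F a \<in> R'"
    and "(a, b) \<in> genrel R S"
  shows "(F a, F b) \<in> genrel R' S'"
proof -
  have E: "equiv R' (genrel R' S')" by (rule genrel_equiv)
  have "genrel R S \<subseteq> inv_image (genrel R' S') F"
  proof (rule genrel_least)
    show "sym (inv_image (genrel R' S') F)" "trans (inv_image (genrel R' S') F)"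
      using E by (auto intro: sym_inv_image trans_inv_image elim: equivE)
  next
    show "(a, a) \<in> inv_image (genrel R' S') F" if "a \<in> R" for a
      using E assms(2)[OF that] by (auto elim!: equivE simp: refl_on_def)
  qed (use assms(1) in simp)
  then show ?thesis using assms(3) by auto
qed

lemma cls_in_quotient: "t \<in> R \<Longrightarrow> cls (genrel R S) t \<in> R // genrel R S"
  unfolding cls_def by (rule quotientI)

lemma cls_self: "t \<in> R \<Longrightarrow> t \<in> cls (genrel R S) t"
  unfolding cls_def by (rule equiv_class_self[OF genrel_equiv])

lemma cls_eqI: "(a, b) \<in> genrel R S \<Longrightarrow> cls (genrel R S) a = cls (genrel R S) b"
  unfolding cls_def by (rule equiv_class_eq[OF genrel_equiv])

lemma cls_eqD:
  "cls (genrel R S) a = cls (genrel R S) b \<Longrightarrow> b \<in> R \<Longrightarrow> (a, b) \<in> genrel R S"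
  unfolding cls_def by (rule eq_equiv_class[OF _ genrel_equiv])

lemma quotient_eq_cls: "X \<in> R // genrel R S \<Longrightarrow> t \<in> X \<Longrightarrow> X = cls (genrel R S) t"
  unfolding cls_def by (erule quotientE) (simp add: equiv_class_eq[OF genrel_equiv])

lemma UN_cls_eq:
  assumes "\<And>a b. a \<in> R \<Longrightarrow> b \<in> R \<Longrightarrow> (a, b) \<in> S \<Longrightarrow> F a = F b" and "t \<in> R"
  shows "(\<Union>s\<in>cls (genrel R S) t. F s) = F t"
  unfolding cls_def
  by (rule UN_equiv_class[OF genrel_equiv congruentI assms(2)]) (rule genrel_respects[OF assms(1)])

lemma hom_iff: "f \<in> hom C a b \<longleftrightarrow> f \<in> cAr C \<and> cdom C f = a \<and> ccod C f = b"
  unfolding hom_def by auto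

context
  fixes C :: "('o,'a) cat"
  assumes cat: "category C"
begin

lemma cat_comp:
  assumes "f \<in> cAr C" "g \<in> cAr C" "ccod C f = cdom C g"
  shows "ccomp C f g \<in> cAr C" "cdom C (ccomp C f g) = cdom C f" "ccod C (ccomp C f g) = ccod C g"
proof -
  have "\<forall>a b c f g. f \<in> hom C a b \<longrightarrow> g \<in> hom C b c \<longrightarrow> ccomp C f g \<in> hom C a c"
    using cat unfolding category_def by (elim conjE)
  then have "ccomp C f g \<in> hom C (cdom C f) (ccod C g)"
    using assms unfolding hom_iff by blast
  then show "ccomp C f g \<in> cAr C" "cdom C (ccomp C f g) = cdom C f" "ccod C (ccomp C f g) = ccod C g"
    unfolding hom_iff by auto
qed

lemma cat_id:
  assumes "a \<in> cOb C"
  shows "cid C a \<in> cAr C" "cdom C (cid C a) = a" "ccod C (cid C a) = a"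
proof -
  have "\<forall>a\<in>cOb C. cid C a \<in> hom C a a"
    using cat unfolding category_def by (elim conjE)
  then show "cid C a \<in> cAr C" "cdom C (cid C a) = a" "ccod C (cid C a) = a"
    using assms unfolding hom_iff by simp_all
qed

lemma cat_ob: "f \<in> cAr C \<Longrightarrow> cdom C f \<in> cOb C" "f \<in> cAr C \<Longrightarrow> ccod C f \<in> cOb C"
  using cat unfolding category_def by (elim conjE, blast)+

lemma cat_idlr:
  assumes "f \<in> cAr C"
  shows "ccomp C (cid C (cdom C f)) f = f" "ccomp C f (cid C (ccod C f)) = f"
proof -
  have "\<forall>a b f. f \<in> hom C a b \<longrightarrow> ccomp C (cid C a) f = f \<and> ccomp C f (cid C b) = f"
    using cat unfolding category_def by (elim conjE)
  then show "ccomp C (cid C (cdom C f)) f = f" "ccomp C f (cid C (ccod C f)) = f"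
    using assms unfolding hom_iff by simp_all
qed

lemma cat_idl: "f \<in> cAr C \<Longrightarrow> cdom C f = a \<Longrightarrow> ccomp C (cid C a) f = f"
  using cat_idlr by blast

lemma cat_idr: "f \<in> cAr C \<Longrightarrow> ccod C f = a \<Longrightarrow> ccomp C f (cid C a) = f"
  using cat_idlr by blast

lemma cat_assoc:
  assumes "f \<in> cAr C" "g \<in> cAr C" "h \<in> cAr C" "ccod C f = cdom C g" "ccod C g = cdom C h"
  shows "ccomp C (ccomp C f g) h = ccomp C f (ccomp C g h)"
proof -
  have "\<forall>a b c d f g h. f \<in> hom C a b \<longrightarrow> g \<in> hom C b c \<longrightarrow> h \<in> hom C c d \<longrightarrow>
      ccomp C (ccomp C f g) h = ccomp C f (ccomp C g h)"
    using cat unfolding category_def by (elim conjE)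
  then show ?thesis using assms unfolding hom_iff by blast
qed

lemma iso_ar: "is_iso C f a b \<Longrightarrow> f \<in> cAr C \<and> cdom C f = a \<and> ccod C f = b"
  unfolding is_iso_def hom_iff by auto

lemma iso_inv:
  assumes "is_iso C f a b"
  shows "cinv C f \<in> cAr C" "cdom C (cinv C f) = b" "ccod C (cinv C f) = a"
    "ccomp C f (cinv C f) = cid C a" "ccomp C (cinv C f) f = cid C b"
proof -
  from assms have f: "cdom C f = a" "ccod C f = b"
    and ex: "\<exists>g. g \<in> hom C b a \<and> ccomp C f g = cid C a \<and> ccomp C g f = cid C b"
    unfolding is_iso_def by (auto simp: hom_iff)
  have "cinv C f \<in> hom C b a \<and> ccomp C f (cinv C f) = cid C a \<and> ccomp C (cinv C f) f = cid C b"
    unfolding cinv_def f by (rule someI_ex[OF ex])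
  then show "cinv C f \<in> cAr C" "cdom C (cinv C f) = b" "ccod C (cinv C f) = a"
    "ccomp C f (cinv C f) = cid C a" "ccomp C (cinv C f) f = cid C b"
    unfolding hom_iff by auto
qed

lemma iso_inv_square:
  assumes f: "is_iso C f a b" and g: "is_iso C g c d"
    and X: "X \<in> cAr C" "cdom C X = b" "ccod C X = d"
    and Y: "Y \<in> cAr C" "cdom C Y = a" "ccod C Y = c"
    and eq: "ccomp C f X = ccomp C Y g"
  shows "ccomp C (cinv C f) Y = ccomp C X (cinv C g)"
proof -
  note fi = iso_inv[OF f] and gi = iso_inv[OF g] and fa = iso_ar[OF f] and ga = iso_ar[OF g]
  note simps = cat_comp cat_idl cat_idr
  have "ccomp C (cinv C f) Y = ccomp C (cinv C f) (ccomp C (ccomp C Y g) (cinv C g))"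
    using gi Y ga by (simp add: cat_assoc simps)
  also have "\<dots> = ccomp C (cinv C f) (ccomp C f (ccomp C X (cinv C g)))"
    unfolding eq[symmetric] using gi fi X fa ga by (simp add: cat_assoc simps)
  also have "\<dots> = ccomp C (ccomp C (cinv C f) f) (ccomp C X (cinv C g))"
    by (rule cat_assoc[symmetric]) (use gi fi X fa ga in \<open>simp_all add: simps\<close>)
  also have "\<dots> = ccomp C X (cinv C g)"
    using gi fi X fa ga by (simp add: simps)
  finally show ?thesis .
qed

end

context
  fixes A B D FO FA
  assumes bf: "bifunctor A B D FO FA"
begin

lemma bf_ob: "a \<in> cOb A \<Longrightarrow> b \<in> cOb B \<Longrightarrow> FO a b \<in> cOb D"
  using bf unfolding bifunctor_def by (elim conjE) blast

lemma bf_ar: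
  assumes "f \<in> cAr A" "g \<in> cAr B"
  shows "FA f g \<in> cAr D" "cdom D (FA f g) = FO (cdom A f) (cdom B g)"
    "ccod D (FA f g) = FO (ccod A f) (ccod B g)"
proof -
  have "\<forall>a a' b b' f g. f \<in> hom A a a' \<longrightarrow> g \<in> hom B b b' \<longrightarrow> FA f g \<in> hom D (FO a b) (FO a' b')"
    using bf unfolding bifunctor_def by (elim conjE)
  then have "FA f g \<in> hom D (FO (cdom A f) (cdom B g)) (FO (ccod A f) (ccod B g))"
    using assms unfolding hom_iff by blast
  then show "FA f g \<in> cAr D" "cdom D (FA f g) = FO (cdom A f) (cdom B g)"
    "ccod D (FA f g) = FO (ccod A f) (ccod B g)"
    unfolding hom_iff by auto
qed

lemma bf_id: "a \<in> cOb A \<Longrightarrow> b \<in> cOb B \<Longrightarrow> FA (cid A a) (cid B b) = cid D (FO a b)"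
  using bf unfolding bifunctor_def by (elim conjE) blast

lemma bf_comp:
  assumes "f \<in> cAr A" "f' \<in> cAr A" "ccod A f = cdom A f'"
    "g \<in> cAr B" "g' \<in> cAr B" "ccod B g = cdom B g'"
  shows "FA (ccomp A f f') (ccomp B g g') = ccomp D (FA f g) (FA f' g')"
proof -
  have "\<forall>a a' a'' b b' b'' f f' g g'. f \<in> hom A a a' \<longrightarrow> f' \<in> hom A a' a'' \<longrightarrow>
      g \<in> hom B b b' \<longrightarrow> g' \<in> hom B b' b'' \<longrightarrow>
      FA (ccomp A f f') (ccomp B g g') = ccomp D (FA f g) (FA f' g')"
    using bf unfolding bifunctor_def by (elim conjE)
  then show ?thesis using assms unfolding hom_iff by blast
qed

end

locale actegory_setting =
  fixes A :: "('mo,'m,'o,'a) actg"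
  assumes actegory: "actegory A"
begin

abbreviation cp (infixr "\<cdot>" 70) where "f \<cdot> g \<equiv> ccomp (Ccat A) f g"
abbreviation "idC c \<equiv> cid (Ccat A) c"
abbreviation "act m f \<equiv> actA A (cid (Mcat A) m) f"
abbreviation "wh h y \<equiv> actA A h (cid (Ccat A) y)"
abbreviation "asc m n y \<equiv> aass A m n y"
abbreviation "asc_inv m n y \<equiv> cinv (Ccat A) (aass A m n y)"
abbreviation "arC f \<equiv> f \<in> cAr (Ccat A)"
abbreviation "arM f \<equiv> f \<in> cAr (Mcat A)"
abbreviation "obC c \<equiv> c \<in> cOb (Ccat A)"
abbreviation "obM c \<equiv> c \<in> cOb (Mcat A)"
abbreviation "dC f \<equiv> cdom (Ccat A) f"
abbreviation "cC f \<equiv> ccod (Ccat A) f"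
abbreviation "dM f \<equiv> cdom (Mcat A) f"
abbreviation "cM f \<equiv> ccod (Mcat A) f"

lemma monoidal: "monoidal A"
  using actegory unfolding actegory_def by (elim conjE)

lemma category_M: "category (Mcat A)"
  using monoidal unfolding monoidal_def Let_def by (elim conjE)

lemma bifunctor_tensor: "bifunctor (Mcat A) (Mcat A) (Mcat A) (tenO A) (tenA A)"
  using monoidal unfolding monoidal_def Let_def by (elim conjE)

lemma unit_ob: "obM (munit A)"
  using monoidal unfolding monoidal_def Let_def by (elim conjE)

lemma rho_iso: "obM m \<Longrightarrow> is_iso (Mcat A) (mrho A m) (tenO A m (munit A)) m"
  using monoidal unfolding monoidal_def Let_def by (elim conjE) blast

lemma category_C: "category (Ccat A)"
  using actegory unfolding actegory_def Let_def by (elim conjE)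

lemma bifunctor_act: "bifunctor (Mcat A) (Ccat A) (Ccat A) (actO A) (actA A)"
  using actegory unfolding actegory_def Let_def by (elim conjE)

lemma lam_iso: "obC x \<Longrightarrow> is_iso (Ccat A) (alam A x) (actO A (munit A) x) x"
  using actegory unfolding actegory_def Let_def by (elim conjE) blast

lemma asc_iso:
  "obM m \<Longrightarrow> obM n \<Longrightarrow> obC x \<Longrightarrow> is_iso (Ccat A) (asc m n x) (actO A (tenO A m n) x) (actO A m (actO A n x))"
  using actegory unfolding actegory_def Let_def by (elim conjE) blast

lemma asc_rho:
  assumes "obM m" "obC x"
  shows "asc m (munit A) x \<cdot> act m (alam A x) = wh (mrho A m) x"
proof -
  have "\<forall>m\<in>cOb (Mcat A). \<forall>x\<in>cOb (Ccat A). asc m (munit A) x \<cdot> act m (alam A x) = wh (mrho A m) x"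
    using actegory unfolding actegory_def Let_def by (elim conjE)
  then show ?thesis using assms by blast
qed

lemma asc_natural_ar:
  assumes "arM h" "arM k" "arC f"
  shows "actA A (tenA A h k) f \<cdot> asc (cM h) (cM k) (cC f) = asc (dM h) (dM k) (dC f) \<cdot> actA A h (actA A k f)"
proof -
  have "\<forall>m m' n n' x y h k f. h \<in> hom (Mcat A) m m' \<longrightarrow> k \<in> hom (Mcat A) n n' \<longrightarrow> f \<in> hom (Ccat A) x y \<longrightarrow>
     actA A (tenA A h k) f \<cdot> asc m' n' y = asc m n x \<cdot> actA A h (actA A k f)"
    using actegory unfolding actegory_def Let_def by (elim conjE)
  then show ?thesis using assms unfolding hom_iff by blast
qed

lemmas Ccomp = cat_comp[OF category_C] and Mcomp = cat_comp[OF category_M]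
lemmas Cid = cat_id[OF category_C] and Mid = cat_id[OF category_M]
lemmas Cob = cat_ob[OF category_C] and Mob = cat_ob[OF category_M]
lemmas Cidl = cat_idl[OF category_C] and Cidr = cat_idr[OF category_C]
lemmas Midl = cat_idl[OF category_M] and Midr = cat_idr[OF category_M]
lemmas Cassoc = cat_assoc[OF category_C]
lemmas Aob = bf_ob[OF bifunctor_act] and Tob = bf_ob[OF bifunctor_tensor]
lemmas Aar = bf_ar[OF bifunctor_act] and Tar = bf_ar[OF bifunctor_tensor]
lemmas Aid = bf_id[OF bifunctor_act] and Tid = bf_id[OF bifunctor_tensor]
lemmas Acomp = bf_comp[OF bifunctor_act]
lemmas rho_ar = iso_ar[OF category_M rho_iso]
lemmas lam_ar = iso_ar[OF category_C lam_iso]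
lemmas asc_ar = iso_ar[OF category_C asc_iso]
lemmas lam_inv = iso_inv[OF category_C lam_iso]
lemmas asc_inv = iso_inv[OF category_C asc_iso]

lemma lam_inv_cancel:
  "obC x \<Longrightarrow> arC h \<Longrightarrow> dC h = x \<Longrightarrow> cinv (Ccat A) (alam A x) \<cdot> (alam A x \<cdot> h) = h"
  using lam_inv[of x] lam_ar[of x] by (simp add: Cassoc[symmetric] Cidl)

lemma asc_inv_cancel:
  "obM m \<Longrightarrow> obM n \<Longrightarrow> obC x \<Longrightarrow> arC h \<Longrightarrow> dC h = actO A m (actO A n x) \<Longrightarrow>
    asc_inv m n x \<cdot> (asc m n x \<cdot> h) = h"
  "obM m \<Longrightarrow> obM n \<Longrightarrow> obC x \<Longrightarrow> arC h \<Longrightarrow> dC h = actO A (tenO A m n) x \<Longrightarrow>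
    asc m n x \<cdot> (asc_inv m n x \<cdot> h) = h"
  using asc_inv[of m n x] asc_ar[of m n x] by (simp_all add: Cassoc[symmetric] Cidl)

lemmas actg_simps = Ccomp Mcomp Cid Mid Cob Mob Cidl Cidr Midl Midr Aob Tob Aar Tar Aid Tid Cassoc
  rho_ar lam_ar asc_ar lam_inv asc_inv lam_inv_cancel asc_inv_cancel unit_ob

lemma act_comp: "obM m \<Longrightarrow> arC f \<Longrightarrow> arC g \<Longrightarrow> cC f = dC g \<Longrightarrow> act m (f \<cdot> g) = act m f \<cdot> act m g"
  using Acomp[of "cid (Mcat A) m" "cid (Mcat A) m" f g] by (simp add: actg_simps)

lemma asc_natural:
  assumes "obM n" "arM h" "dM h = k'" "cM h = k" "obC y"
  shows "wh (tenA A (cid (Mcat A) n) h) y \<cdot> asc n k y = asc n k' y \<cdot> act n (wh h y)"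
  using asc_natural_ar[of "cid (Mcat A) n" h "idC y"] assms by (simp add: actg_simps)

lemma asc_inv_natural:
  assumes "obM n" "arM h" "dM h = k'" "cM h = k" "obC y"
  shows "asc_inv n k' y \<cdot> wh (tenA A (cid (Mcat A) n) h) y = act n (wh h y) \<cdot> asc_inv n k y"
proof -
  have "obM k" "obM k'" using assms Mob by auto
  then show ?thesis
    by (intro iso_inv_square[OF category_C asc_iso asc_iso])
      (use assms asc_natural[OF assms] in \<open>simp_all add: actg_simps\<close>)
qed

lemma asc_natural':
  assumes "obM n" "arM h" "dM h = k'" "cM h = k" "obC y" "arC r" "dC r = actO A n (actO A k y)"
  shows "wh (tenA A (cid (Mcat A) n) h) y \<cdot> (asc n k y \<cdot> r) = asc n k' y \<cdot> (act n (wh h y) \<cdot> r)"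
proof -
  have "obM k" "obM k'" using assms Mob by auto
  then show ?thesis
    using asc_natural[OF assms(1-5)] assms
      Cassoc[of "wh (tenA A (cid (Mcat A) n) h) y" "asc n k y" r]
      Cassoc[of "asc n k' y" "act n (wh h y)" r] by (simp add: actg_simps)
qed

lemma asc_inv_natural':
  assumes "obM n" "arM h" "dM h = k'" "cM h = k" "obC y" "arC r" "dC r = actO A (tenO A n k) y"
  shows "asc_inv n k' y \<cdot> (wh (tenA A (cid (Mcat A) n) h) y \<cdot> r) = act n (wh h y) \<cdot> (asc_inv n k y \<cdot> r)"
proof -
  have "obM k" "obM k'" using assms Mob by auto
  then show ?thesis
    using asc_inv_natural[OF assms(1-5)] assms
      Cassoc[of "asc_inv n k' y" "wh (tenA A (cid (Mcat A) n) h) y" r]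
      Cassoc[of "act n (wh h y)" "asc_inv n k y" r] by (simp add: actg_simps)
qed

lemmas natural_simps = act_comp asc_natural asc_natural' asc_inv_natural asc_inv_natural'

end

section \<open>Optics as classes of representatives\<close>

context actegory_setting
begin

lemma opt_reps_iff: "(n,f,g) \<in> opt_reps A c c' x x \<longleftrightarrow>
   obM n \<and> arC f \<and> dC f = c \<and> cC f = actO A n x \<and> arC g \<and> dC g = actO A n x \<and> cC g = c'"
  unfolding opt_reps_def hom_iff by auto

lemma opt_rel_slide:
  assumes "arM h" "dM h = n" "cM h = m" "obC x"
    "arC \<alpha>" "dC \<alpha> = c" "cC \<alpha> = actO A n x" "arC \<beta>" "dC \<beta> = actO A m x" "cC \<beta> = c'"
  shows "((m, \<alpha> \<cdot> wh h x, \<beta>), (n, \<alpha>, wh h x \<cdot> \<beta>)) \<in> opt_rel A c c' x x"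
  unfolding opt_rel_def
proof (rule genrel_stepI)
  have "obM n" "obM m" using assms Mob by auto
  then show "(m, \<alpha> \<cdot> wh h x, \<beta>) \<in> opt_reps A c c' x x" "(n, \<alpha>, wh h x \<cdot> \<beta>) \<in> opt_reps A c c' x x"
    unfolding opt_reps_iff using assms by (simp_all add: actg_simps)
  show "((m, \<alpha> \<cdot> wh h x, \<beta>), (n, \<alpha>, wh h x \<cdot> \<beta>)) \<in> opt_step A c c' x x"
    unfolding opt_step_def hom_iff using assms by blast
qed

lemma RL_quotient: "W \<in> RL A x c c' \<Longrightarrow> W \<in> opt_reps A c c' x x // genrel (opt_reps A c c' x x) (opt_step A c c' x x)"
  unfolding RL_def Optic_def opt_rel_def .

lemma RL_cls: "t \<in> opt_reps A c c' x x \<Longrightarrow> cls (opt_rel A c c' x x) t \<in> RL A x c c'"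
  unfolding RL_def Optic_def opt_rel_def by (rule cls_in_quotient)

lemma opt_cls_self: "t \<in> opt_reps A c c' x x \<Longrightarrow> t \<in> cls (opt_rel A c c' x x) t"
  unfolding opt_rel_def by (rule cls_self)

lemma RL_eq_cls: "W \<in> RL A x c c' \<Longrightarrow> t \<in> W \<Longrightarrow> W = cls (opt_rel A c c' x x) t"
  unfolding opt_rel_def by (rule quotient_eq_cls[OF RL_quotient])

lemma RL_reps:
  assumes "W \<in> RL A x c c'" "(n,f,g) \<in> W"
  shows "obM n" "arC f" "dC f = c" "cC f = actO A n x" "arC g" "dC g = actO A n x" "cC g = c'"
proof -
  have "(n,f,g) \<in> opt_reps A c c' x x"
    using in_quotient_imp_subset[OF genrel_equiv RL_quotient[OF assms(1)]] assms(2) by blast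
  then show "obM n" "arC f" "dC f = c" "cC f = actO A n x" "arC g" "dC g = actO A n x" "cC g = c'"
    unfolding opt_reps_iff by simp_all
qed

lemma RL_obtain_rep:
  assumes "W \<in> RL A x c c'"
  obtains n f g where "(n,f,g) \<in> W"
  using in_quotient_imp_non_empty[OF genrel_equiv RL_quotient[OF assms]] by auto

lemma RL_invariant:
  assumes W: "W \<in> RL A x c c'" and s: "(n,f,g) \<in> W" and t: "(n',f',g') \<in> W"
    and slide: "\<And>k1 k2 h \<alpha> \<beta>. obM k1 \<Longrightarrow> obM k2 \<Longrightarrow> arM h \<Longrightarrow> dM h = k2 \<Longrightarrow> cM h = k1 \<Longrightarrow>
      arC \<alpha> \<Longrightarrow> dC \<alpha> = c \<Longrightarrow> cC \<alpha> = actO A k2 x \<Longrightarrow> arC \<beta> \<Longrightarrow> dC \<beta> = actO A k1 x \<Longrightarrow> cC \<beta> = c' \<Longrightarrow>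
      F k1 (\<alpha> \<cdot> wh h x) \<beta> = F k2 \<alpha> (wh h x \<cdot> \<beta>)"
  shows "F n f g = F n' f' g'"
proof -
  have "((n,f,g), (n',f',g')) \<in> genrel (opt_reps A c c' x x) (opt_step A c c' x x)"
    using in_quotient_imp_in_rel[OF genrel_equiv RL_quotient[OF W]] s t by blast
  then have "case_prod (\<lambda>n. case_prod (F n)) (n,f,g) = case_prod (\<lambda>n. case_prod (F n)) (n',f',g')"
  proof (rule genrel_respects[rotated])
    fix a b assume "(a, b) \<in> opt_step A c c' x x"
    then obtain k1 k2 h \<alpha> \<beta> where "a = (k1, \<alpha> \<cdot> wh h x, \<beta>)" "b = (k2, \<alpha>, wh h x \<cdot> \<beta>)"
      and "arM h" "dM h = k2" "cM h = k1" "arC \<alpha>" "dC \<alpha> = c" "cC \<alpha> = actO A k2 x"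
        "arC \<beta>" "dC \<beta> = actO A k1 x" "cC \<beta> = c'"
      unfolding opt_step_def hom_iff by blast
    moreover have "obM k1" "obM k2" using calculation Mob by auto
    ultimately show "case_prod (\<lambda>n. case_prod (F n)) a = case_prod (\<lambda>n. case_prod (F n)) b"
      using slide by simp
  qed
  then show ?thesis by simp
qed

lemma RL_UN_eq:
  assumes W: "W \<in> RL A x c c'" and t: "(n,f,g) \<in> W"
    and slide: "\<And>k1 k2 h \<alpha> \<beta>. obM k1 \<Longrightarrow> obM k2 \<Longrightarrow> arM h \<Longrightarrow> dM h = k2 \<Longrightarrow> cM h = k1 \<Longrightarrow>
      arC \<alpha> \<Longrightarrow> dC \<alpha> = c \<Longrightarrow> cC \<alpha> = actO A k2 x \<Longrightarrow> arC \<beta> \<Longrightarrow> dC \<beta> = actO A k1 x \<Longrightarrow> cC \<beta> = c' \<Longrightarrow>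
      F k1 (\<alpha> \<cdot> wh h x) \<beta> = F k2 \<alpha> (wh h x \<cdot> \<beta>)"
  shows "(\<Union>(n,f,g)\<in>W. F n f g) = F n f g"
proof (rule UN_constant_eq[OF t], clarify)
  fix n' f' g' assume "(n',f',g') \<in> W"
  show "F n' f' g' = F n f g" by (rule RL_invariant[OF W \<open>(n',f',g') \<in> W\<close> t slide])
qed

lemma outside_cls:
  assumes W: "W \<in> RL A x c c'" and t: "(n,f,g) \<in> W" and x: "obC x"
  shows "outside A W = f \<cdot> g"
proof -
  obtain n' f' g' where s: "(SOME s. s \<in> W) = (n',f',g')" by (cases "SOME s. s \<in> W")
  have "(n',f',g') \<in> W" unfolding s[symmetric] using t by (rule someI)
  then have "f' \<cdot> g' = f \<cdot> g"
    by (rule RL_invariant[OF W _ t]) (use x in \<open>simp add: actg_simps\<close>)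
  then show ?thesis unfolding outside_def s by simp
qed

lemma rl_dimap_cls:
  assumes W: "W \<in> RL A x c c'" and t: "(n,f,g) \<in> W" and x: "obC x"
    and p: "arC p" "dC p = d" "cC p = c" and q: "arC q" "dC q = c'" "cC q = d'"
  shows "rl_dimap A x d d' p q W = cls (opt_rel A d d' x x) (n, p \<cdot> f, g \<cdot> q)"
  unfolding rl_dimap_def
proof (rule RL_UN_eq[OF W t])
  fix k1 k2 h \<alpha> \<beta> assume ty: "obM k1" "obM k2" "arM h" "dM h = k2" "cM h = k1"
    "arC \<alpha>" "dC \<alpha> = c" "cC \<alpha> = actO A k2 x" "arC \<beta>" "dC \<beta> = actO A k1 x" "cC \<beta> = c'"
  have "((k1, (p \<cdot> \<alpha>) \<cdot> wh h x, \<beta> \<cdot> q), (k2, p \<cdot> \<alpha>, wh h x \<cdot> (\<beta> \<cdot> q))) \<in> opt_rel A d d' x x"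
    by (rule opt_rel_slide) (use ty p q x in \<open>simp_all add: actg_simps\<close>)
  then show "cls (opt_rel A d d' x x) (k1, p \<cdot> (\<alpha> \<cdot> wh h x), \<beta> \<cdot> q) =
             cls (opt_rel A d d' x x) (k2, p \<cdot> \<alpha>, (wh h x \<cdot> \<beta>) \<cdot> q)"
    using ty p q x unfolding opt_rel_def by (simp add: cls_eqI actg_simps)
qed

lemma rl_str_cls:
  assumes W: "W \<in> RL A x c c'" and t: "(k,f,g) \<in> W" and x: "obC x" and m: "obM m"
  shows "rl_str A x m c c' W = cls (opt_rel A (actO A m c) (actO A m c') x x)
           (tenO A m k, act m f \<cdot> asc_inv m k x, asc m k x \<cdot> act m g)"
  unfolding rl_str_def
proof (rule RL_UN_eq[OF W t])
  fix k1 k2 h \<alpha> \<beta> assume ty: "obM k1" "obM k2" "arM h" "dM h = k2" "cM h = k1"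
    "arC \<alpha>" "dC \<alpha> = c" "cC \<alpha> = actO A k2 x" "arC \<beta>" "dC \<beta> = actO A k1 x" "cC \<beta> = c'"
  let ?u = "tenA A (cid (Mcat A) m) h"
  have "((tenO A m k1, (act m \<alpha> \<cdot> asc_inv m k2 x) \<cdot> wh ?u x, asc m k1 x \<cdot> act m \<beta>),
         (tenO A m k2, act m \<alpha> \<cdot> asc_inv m k2 x, wh ?u x \<cdot> (asc m k1 x \<cdot> act m \<beta>)))
        \<in> opt_rel A (actO A m c) (actO A m c') x x"
    by (rule opt_rel_slide) (use ty x m in \<open>simp_all add: actg_simps\<close>)
  then show "cls (opt_rel A (actO A m c) (actO A m c') x x)
               (tenO A m k1, act m (\<alpha> \<cdot> wh h x) \<cdot> asc_inv m k1 x, asc m k1 x \<cdot> act m \<beta>) =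
             cls (opt_rel A (actO A m c) (actO A m c') x x)
               (tenO A m k2, act m \<alpha> \<cdot> asc_inv m k2 x, asc m k2 x \<cdot> act m (wh h x \<cdot> \<beta>))"
    using ty x m unfolding opt_rel_def by (simp add: cls_eqI actg_simps natural_simps)
qed

end

section \<open>The composite \<open>R\<^sub>x \<otimes> L\<^sub>x \<otimes> R\<^sub>x \<otimes> L\<^sub>x\<close> and double optics\<close>

context actegory_setting
begin

lemma rep4_iff: "(n1,f,d,g,n2,h,k) \<in> rep4 A x c c' \<longleftrightarrow>
   obM n1 \<and> arC f \<and> dC f = c \<and> cC f = actO A n1 x \<and> obC d \<and> arC g \<and> dC g = actO A n1 x \<and> cC g = d \<and>
   obM n2 \<and> arC h \<and> dC h = d \<and> cC h = actO A n2 x \<and> arC k \<and> dC k = actO A n2 x \<and> cC k = c'"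
  unfolding rep4_def hom_iff by auto

lemma rel4_trans: "(a,b) \<in> rel4 A x c c' \<Longrightarrow> (b,e) \<in> rel4 A x c c' \<Longrightarrow> (a,e) \<in> rel4 A x c c'"
  using genrel_equiv[of "rep4 A x c c'" "step4 A x"] unfolding rel4_def equiv_def by (meson transD)

lemma rel4_sym: "(a,b) \<in> rel4 A x c c' \<Longrightarrow> (b,a) \<in> rel4 A x c c'"
  using genrel_equiv[of "rep4 A x c c'" "step4 A x"] unfolding rel4_def equiv_def by (meson symD)

lemma rel4_slide_left:
  assumes "arM u" "dM u = n1" "cM u = m1" "obC x"
    "arC f" "dC f = c" "cC f = actO A n1 x" "obC d" "arC g" "dC g = actO A m1 x" "cC g = d"
    "obM n2" "arC h" "dC h = d" "cC h = actO A n2 x" "arC k" "dC k = actO A n2 x" "cC k = c'"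
  shows "((m1, f \<cdot> wh u x, d, g, n2, h, k), (n1, f, d, wh u x \<cdot> g, n2, h, k)) \<in> rel4 A x c c'"
  unfolding rel4_def
proof (rule genrel_stepI)
  have "obM n1" "obM m1" using assms Mob by auto
  then show "(m1, f \<cdot> wh u x, d, g, n2, h, k) \<in> rep4 A x c c'" "(n1, f, d, wh u x \<cdot> g, n2, h, k) \<in> rep4 A x c c'"
    unfolding rep4_iff using assms by (simp_all add: actg_simps)
  show "((m1, f \<cdot> wh u x, d, g, n2, h, k), (n1, f, d, wh u x \<cdot> g, n2, h, k)) \<in> step4 A x"
    unfolding step4_def hom_iff by (rule UnI1, rule UnI1) (use assms in blast)
qed

lemma rel4_slide_mid:
  assumes "arC p" "dC p = d" "cC p = d'" "obC x"
    "obM n1" "arC f" "dC f = c" "cC f = actO A n1 x" "arC g" "dC g = actO A n1 x" "cC g = d"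
    "obM n2" "arC h" "dC h = d'" "cC h = actO A n2 x" "arC k" "dC k = actO A n2 x" "cC k = c'"
  shows "((n1, f, d', g \<cdot> p, n2, h, k), (n1, f, d, g, n2, p \<cdot> h, k)) \<in> rel4 A x c c'"
  unfolding rel4_def
proof (rule genrel_stepI)
  have "obC d" "obC d'" using assms Cob by auto
  then show "(n1, f, d', g \<cdot> p, n2, h, k) \<in> rep4 A x c c'" "(n1, f, d, g, n2, p \<cdot> h, k) \<in> rep4 A x c c'"
    unfolding rep4_iff using assms by (simp_all add: actg_simps)
  show "((n1, f, d', g \<cdot> p, n2, h, k), (n1, f, d, g, n2, p \<cdot> h, k)) \<in> step4 A x"
    unfolding step4_def hom_iff by (rule UnI1, rule UnI2) (use assms in blast)
qed

lemma rel4_slide_right: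
  assumes "arM u" "dM u = n2" "cM u = m2" "obC x"
    "obM n1" "arC f" "dC f = c" "cC f = actO A n1 x" "obC d" "arC g" "dC g = actO A n1 x" "cC g = d"
    "arC h" "dC h = d" "cC h = actO A n2 x" "arC k" "dC k = actO A m2 x" "cC k = c'"
  shows "((n1, f, d, g, m2, h \<cdot> wh u x, k), (n1, f, d, g, n2, h, wh u x \<cdot> k)) \<in> rel4 A x c c'"
  unfolding rel4_def
proof (rule genrel_stepI)
  have "obM n2" "obM m2" using assms Mob by auto
  then show "(n1, f, d, g, m2, h \<cdot> wh u x, k) \<in> rep4 A x c c'" "(n1, f, d, g, n2, h, wh u x \<cdot> k) \<in> rep4 A x c c'"
    unfolding rep4_iff using assms by (simp_all add: actg_simps)
  show "((n1, f, d, g, m2, h \<cdot> wh u x, k), (n1, f, d, g, n2, h, wh u x \<cdot> k)) \<in> step4 A x"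
    unfolding step4_def hom_iff by (rule UnI2) (use assms in blast)
qed

lemma step4E:
  assumes "(a,b) \<in> step4 A x"
  obtains (left) m1 n1 u f d g n2 h k
    where "a = (m1, f \<cdot> wh u x, d, g, n2, h, k)" "b = (n1, f, d, wh u x \<cdot> g, n2, h, k)"
      "arM u" "dM u = n1" "cM u = m1"
  | (mid) n1 f d d' g p n2 h k
    where "a = (n1, f, d', g \<cdot> p, n2, h, k)" "b = (n1, f, d, g, n2, p \<cdot> h, k)"
      "arC p" "dC p = d" "cC p = d'"
  | (right) n1 f d g m2 n2 u h k
    where "a = (n1, f, d, g, m2, h \<cdot> wh u x, k)" "b = (n1, f, d, g, n2, h, wh u x \<cdot> k)"
      "arM u" "dM u = n2" "cM u = m2"
  using assms unfolding step4_def hom_iff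
  by (simp only: Un_iff mem_Collect_eq prod.inject) (elim disjE exE conjE; metis)

lemma opt2_reps_iff: "(m1,m2,\<alpha>,\<gamma>,\<beta>) \<in> opt2_reps A x y \<longleftrightarrow>
   obM m1 \<and> obM m2 \<and> arC \<alpha> \<and> dC \<alpha> = x \<and> cC \<alpha> = actO A m1 y \<and> arC \<gamma> \<and> dC \<gamma> = actO A m1 y \<and>
   cC \<gamma> = actO A m2 y \<and> arC \<beta> \<and> dC \<beta> = actO A m2 y \<and> cC \<beta> = x"
  unfolding opt2_reps_def hom_iff by auto

lemma opt2_rel_refl: "a \<in> opt2_reps A x y \<Longrightarrow> (a,a) \<in> opt2_rel A x y"
  using genrel_equiv[of "opt2_reps A x y" "opt2_step A x y"]
  unfolding opt2_rel_def equiv_def refl_on_def by blast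

lemma opt2_rel_trans: "(a,b) \<in> opt2_rel A x y \<Longrightarrow> (b,e) \<in> opt2_rel A x y \<Longrightarrow> (a,e) \<in> opt2_rel A x y"
  using genrel_equiv[of "opt2_reps A x y" "opt2_step A x y"]
  unfolding opt2_rel_def equiv_def by (meson transD)

lemma opt2_rel_slide_left:
  assumes "arM h" "dM h = n1" "cM h = m1" "obC y"
    "arC \<alpha>" "dC \<alpha> = x" "cC \<alpha> = actO A n1 y" "arC \<gamma>" "dC \<gamma> = actO A m1 y" "cC \<gamma> = actO A m2 y"
    "obM m2" "arC \<beta>" "dC \<beta> = actO A m2 y" "cC \<beta> = x"
  shows "((m1, m2, \<alpha> \<cdot> wh h y, \<gamma>, \<beta>), (n1, m2, \<alpha>, wh h y \<cdot> \<gamma>, \<beta>)) \<in> opt2_rel A x y"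
  unfolding opt2_rel_def
proof (rule genrel_stepI)
  have "obM n1" "obM m1" using assms Mob by auto
  then show "(m1, m2, \<alpha> \<cdot> wh h y, \<gamma>, \<beta>) \<in> opt2_reps A x y" "(n1, m2, \<alpha>, wh h y \<cdot> \<gamma>, \<beta>) \<in> opt2_reps A x y"
    unfolding opt2_reps_iff using assms by (simp_all add: actg_simps)
  show "((m1, m2, \<alpha> \<cdot> wh h y, \<gamma>, \<beta>), (n1, m2, \<alpha>, wh h y \<cdot> \<gamma>, \<beta>)) \<in> opt2_step A x y"
    unfolding opt2_step_def hom_iff by (rule UnI1) (use assms in blast)
qed

lemma opt2_rel_slide_right:
  assumes "arM h" "dM h = n2" "cM h = m2" "obC y"
    "obM m1" "arC \<alpha>" "dC \<alpha> = x" "cC \<alpha> = actO A m1 y" "arC \<gamma>" "dC \<gamma> = actO A m1 y" "cC \<gamma> = actO A n2 y"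
    "arC \<beta>" "dC \<beta> = actO A m2 y" "cC \<beta> = x"
  shows "((m1, m2, \<alpha>, \<gamma> \<cdot> wh h y, \<beta>), (m1, n2, \<alpha>, \<gamma>, wh h y \<cdot> \<beta>)) \<in> opt2_rel A x y"
  unfolding opt2_rel_def
proof (rule genrel_stepI)
  have "obM n2" "obM m2" using assms Mob by auto
  then show "(m1, m2, \<alpha>, \<gamma> \<cdot> wh h y, \<beta>) \<in> opt2_reps A x y" "(m1, n2, \<alpha>, \<gamma>, wh h y \<cdot> \<beta>) \<in> opt2_reps A x y"
    unfolding opt2_reps_iff using assms by (simp_all add: actg_simps)
  show "((m1, m2, \<alpha>, \<gamma> \<cdot> wh h y, \<beta>), (m1, n2, \<alpha>, \<gamma>, wh h y \<cdot> \<beta>)) \<in> opt2_step A x y"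
    unfolding opt2_step_def hom_iff by (rule UnI2) (use assms in blast)
qed

lemma opt2_stepE:
  assumes "(a,b) \<in> opt2_step A x y"
  obtains (left) m1 n1 m2 h \<alpha> \<gamma> \<beta>
    where "a = (m1, m2, \<alpha> \<cdot> wh h y, \<gamma>, \<beta>)" "b = (n1, m2, \<alpha>, wh h y \<cdot> \<gamma>, \<beta>)"
      "arM h" "dM h = n1" "cM h = m1"
  | (right) m1 m2 n2 h \<alpha> \<gamma> \<beta>
    where "a = (m1, m2, \<alpha>, \<gamma> \<cdot> wh h y, \<beta>)" "b = (m1, n2, \<alpha>, \<gamma>, wh h y \<cdot> \<beta>)"
      "arM h" "dM h = n2" "cM h = m2"
  using assms unfolding opt2_step_def hom_iff
  by (simp only: Un_iff mem_Collect_eq prod.inject) (elim disjE exE conjE; metis)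

lemma dbl_cls:
  assumes W: "W \<in> RL A x c c'" and t: "(n,f,g) \<in> W" and x: "obC x"
  shows "dbl A x c c' W = cls (rel4 A x c c') (n, f, actO A n x, idC (actO A n x), n, idC (actO A n x), g)"
proof -
  have "dbl A x c c' W = cls (rel4 A x c c') (n, f, actO A n x, act n (idC x), n, idC (actO A n x), g)"
    unfolding dbl_def
  proof (rule RL_UN_eq[OF W t])
    fix k1 k2 h \<alpha> \<beta> assume ty: "obM k1" "obM k2" "arM h" "dM h = k2" "cM h = k1"
      "arC \<alpha>" "dC \<alpha> = c" "cC \<alpha> = actO A k2 x" "arC \<beta>" "dC \<beta> = actO A k1 x" "cC \<beta> = c'"
    let ?H = "wh h x" and ?I1 = "idC (actO A k1 x)" and ?I2 = "idC (actO A k2 x)"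
    have "((k1, \<alpha> \<cdot> ?H, actO A k1 x, ?I1, k1, ?I1, \<beta>), (k2, \<alpha>, actO A k1 x, ?H \<cdot> ?I1, k1, ?I1, \<beta>))
          \<in> rel4 A x c c'"
      by (rule rel4_slide_left) (use ty x in \<open>simp_all add: actg_simps\<close>)
    moreover have "((k2, \<alpha>, actO A k1 x, ?I2 \<cdot> ?H, k1, ?I1, \<beta>), (k2, \<alpha>, actO A k2 x, ?I2, k1, ?H \<cdot> ?I1, \<beta>))
          \<in> rel4 A x c c'"
      by (rule rel4_slide_mid) (use ty x in \<open>simp_all add: actg_simps\<close>)
    moreover have "((k2, \<alpha>, actO A k2 x, ?I2, k1, ?I2 \<cdot> ?H, \<beta>), (k2, \<alpha>, actO A k2 x, ?I2, k2, ?I2, ?H \<cdot> \<beta>))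
          \<in> rel4 A x c c'"
      by (rule rel4_slide_right) (use ty x in \<open>simp_all add: actg_simps\<close>)
    ultimately have "((k1, \<alpha> \<cdot> ?H, actO A k1 x, ?I1, k1, ?I1, \<beta>), (k2, \<alpha>, actO A k2 x, ?I2, k2, ?I2, ?H \<cdot> \<beta>))
          \<in> rel4 A x c c'"
      using ty x by (simp add: actg_simps) (meson rel4_trans)
    then show "cls (rel4 A x c c') (k1, \<alpha> \<cdot> ?H, actO A k1 x, act k1 (idC x), k1, ?I1, \<beta>) =
        cls (rel4 A x c c') (k2, \<alpha>, actO A k2 x, act k2 (idC x), k2, ?I2, ?H \<cdot> \<beta>)"
      using ty x unfolding rel4_def by (simp add: actg_simps cls_eqI)
  qed
  then show ?thesis using RL_reps(1)[OF W t] x by (simp add: actg_simps)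
qed

lemma glue_right_cls:
  assumes V: "V \<in> RL A y d c'" and t: "(n2,h,k) \<in> V" and y: "obC y" and d: "obC d"
    and ty: "obM n1" "arC f" "dC f = c" "cC f = actO A n1 y" "arC g" "dC g = actO A n1 y" "cC g = d"
  shows "(\<Union>(n2,h,k)\<in>V. cls (rel4 A y c c') (n1,f,d,g,n2,h,k)) = cls (rel4 A y c c') (n1,f,d,g,n2,h,k)"
proof (rule RL_UN_eq[OF V t])
  fix k1 k2 u \<alpha> \<beta> assume "obM k1" "obM k2" "arM u" "dM u = k2" "cM u = k1"
    "arC \<alpha>" "dC \<alpha> = d" "cC \<alpha> = actO A k2 y" "arC \<beta>" "dC \<beta> = actO A k1 y" "cC \<beta> = c'"
  then have "((n1, f, d, g, k1, \<alpha> \<cdot> wh u y, \<beta>), (n1, f, d, g, k2, \<alpha>, wh u y \<cdot> \<beta>)) \<in> rel4 A y c c'"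
    by (intro rel4_slide_right) (use ty y d in simp_all)
  then show "cls (rel4 A y c c') (n1, f, d, g, k1, \<alpha> \<cdot> wh u y, \<beta>) =
             cls (rel4 A y c c') (n1, f, d, g, k2, \<alpha>, wh u y \<cdot> \<beta>)"
    unfolding rel4_def by (rule cls_eqI)
qed

lemma glue_cls:
  assumes U: "U \<in> RL A y c d" and V: "V \<in> RL A y d c'" and t1: "(n1,f,g) \<in> U" and t2: "(n2,h,k) \<in> V"
    and y: "obC y" and d: "obC d"
  shows "glue A y c d c' U V = cls (rel4 A y c c') (n1,f,d,g,n2,h,k)"
proof -
  have "glue A y c d c' U V = (\<Union>(n1,f,g)\<in>U. cls (rel4 A y c c') (n1,f,d,g,n2,h,k))"
    unfolding glue_def
  proof (rule SUP_cong[OF refl], clarify)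
    fix n1' f' g' assume "(n1',f',g') \<in> U"
    from RL_reps[OF U this] show "(\<Union>(n2,h,k)\<in>V. cls (rel4 A y c c') (n1',f',d,g',n2,h,k)) =
        cls (rel4 A y c c') (n1',f',d,g',n2,h,k)"
      by (rule glue_right_cls[OF V t2 y d])
  qed
  also have "\<dots> = cls (rel4 A y c c') (n1,f,d,g,n2,h,k)"
  proof (rule RL_UN_eq[OF U t1])
    fix k1 k2 u \<alpha> \<beta> assume "obM k1" "obM k2" "arM u" "dM u = k2" "cM u = k1"
      "arC \<alpha>" "dC \<alpha> = c" "cC \<alpha> = actO A k2 y" "arC \<beta>" "dC \<beta> = actO A k1 y" "cC \<beta> = d"
    then have "((k1, \<alpha> \<cdot> wh u y, d, \<beta>, n2, h, k), (k2, \<alpha>, d, wh u y \<cdot> \<beta>, n2, h, k)) \<in> rel4 A y c c'"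
      by (intro rel4_slide_left) (use y d RL_reps[OF V t2] in simp_all)
    then show "cls (rel4 A y c c') (k1, \<alpha> \<cdot> wh u y, d, \<beta>, n2, h, k) =
               cls (rel4 A y c c') (k2, \<alpha>, d, wh u y \<cdot> \<beta>, n2, h, k)"
      unfolding rel4_def by (rule cls_eqI)
  qed
  finally show ?thesis .
qed

lemma once_cls:
  assumes l: "l \<in> Optic A x x y y" and t: "(m,\<alpha>,\<beta>) \<in> l" and y: "obC y"
  shows "once A x y l = cls (opt2_rel A x y) (m, m, \<alpha>, idC (actO A m y), \<beta>)"
  unfolding once_def
proof (rule RL_UN_eq[OF l[folded RL_def] t])
  fix k1 k2 h \<alpha> \<beta> assume ty: "obM k1" "obM k2" "arM h" "dM h = k2" "cM h = k1"
    "arC \<alpha>" "dC \<alpha> = x" "cC \<alpha> = actO A k2 y" "arC \<beta>" "dC \<beta> = actO A k1 y" "cC \<beta> = x"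
  have "((k1, k1, \<alpha> \<cdot> wh h y, idC (actO A k1 y), \<beta>), (k2, k1, \<alpha>, wh h y \<cdot> idC (actO A k1 y), \<beta>))
        \<in> opt2_rel A x y"
    by (rule opt2_rel_slide_left) (use ty y in \<open>simp_all add: actg_simps\<close>)
  moreover have "((k2, k1, \<alpha>, idC (actO A k2 y) \<cdot> wh h y, \<beta>), (k2, k2, \<alpha>, idC (actO A k2 y), wh h y \<cdot> \<beta>))
        \<in> opt2_rel A x y"
    by (rule opt2_rel_slide_right) (use ty y in \<open>simp_all add: actg_simps\<close>)
  ultimately have "((k1, k1, \<alpha> \<cdot> wh h y, idC (actO A k1 y), \<beta>), (k2, k2, \<alpha>, idC (actO A k2 y), wh h y \<cdot> \<beta>))
        \<in> opt2_rel A x y"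
    using ty y by (simp add: actg_simps) (meson opt2_rel_trans)
  then show "cls (opt2_rel A x y) (k1, k1, \<alpha> \<cdot> wh h y, idC (actO A k1 y), \<beta>) =
             cls (opt2_rel A x y) (k2, k2, \<alpha>, idC (actO A k2 y), wh h y \<cdot> \<beta>)"
    unfolding opt2_rel_def by (rule cls_eqI)
qed

lemma twice_cls:
  assumes l: "l \<in> Optic A x x y y" and t: "(m,\<alpha>,\<beta>) \<in> l" and y: "obC y"
  shows "twice A x y l = cls (opt2_rel A x y) (m, m, \<alpha>, \<beta> \<cdot> \<alpha>, \<beta>)"
  unfolding twice_def
proof (rule RL_UN_eq[OF l[folded RL_def] t])
  fix k1 k2 h \<alpha> \<beta> assume ty: "obM k1" "obM k2" "arM h" "dM h = k2" "cM h = k1"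
    "arC \<alpha>" "dC \<alpha> = x" "cC \<alpha> = actO A k2 y" "arC \<beta>" "dC \<beta> = actO A k1 y" "cC \<beta> = x"
  have "((k1, k1, \<alpha> \<cdot> wh h y, \<beta> \<cdot> (\<alpha> \<cdot> wh h y), \<beta>), (k2, k1, \<alpha>, wh h y \<cdot> (\<beta> \<cdot> (\<alpha> \<cdot> wh h y)), \<beta>))
        \<in> opt2_rel A x y"
    by (rule opt2_rel_slide_left) (use ty y in \<open>simp_all add: actg_simps\<close>)
  moreover have "((k2, k1, \<alpha>, (wh h y \<cdot> (\<beta> \<cdot> \<alpha>)) \<cdot> wh h y, \<beta>), (k2, k2, \<alpha>, wh h y \<cdot> (\<beta> \<cdot> \<alpha>), wh h y \<cdot> \<beta>))
        \<in> opt2_rel A x y"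
    by (rule opt2_rel_slide_right) (use ty y in \<open>simp_all add: actg_simps\<close>)
  ultimately have "((k1, k1, \<alpha> \<cdot> wh h y, \<beta> \<cdot> (\<alpha> \<cdot> wh h y), \<beta>), (k2, k2, \<alpha>, (wh h y \<cdot> \<beta>) \<cdot> \<alpha>, wh h y \<cdot> \<beta>))
        \<in> opt2_rel A x y"
    using ty y by (simp add: actg_simps) (meson opt2_rel_trans)
  then show "cls (opt2_rel A x y) (k1, k1, \<alpha> \<cdot> wh h y, \<beta> \<cdot> (\<alpha> \<cdot> wh h y), \<beta>) =
             cls (opt2_rel A x y) (k2, k2, \<alpha>, (wh h y \<cdot> \<beta>) \<cdot> \<alpha>, wh h y \<cdot> \<beta>)"
    unfolding opt2_rel_def by (rule cls_eqI)
qed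

lemma once_eq_twice_iff:
  assumes l: "l \<in> Optic A x x y y" and t: "(m,\<alpha>,\<beta>) \<in> l" and y: "obC y"
  shows "once A x y l = twice A x y l \<longleftrightarrow>
    ((m, m, \<alpha>, idC (actO A m y), \<beta>), (m, m, \<alpha>, \<beta> \<cdot> \<alpha>, \<beta>)) \<in> opt2_rel A x y"
proof -
  have "(m, m, \<alpha>, \<beta> \<cdot> \<alpha>, \<beta>) \<in> opt2_reps A x y"
    using RL_reps[OF l[folded RL_def] t] y unfolding opt2_reps_iff by (simp add: actg_simps)
  then show ?thesis
    unfolding once_cls[OF l t y] twice_cls[OF l t y] opt2_rel_def
    using cls_eqD cls_eqI by metis
qed

end

section \<open>Two-cells out of \<open>R\<^sub>x \<otimes> L\<^sub>x\<close>\<close>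

context actegory_setting
begin

lemma two_cell_RL:
  "two_cell A x y \<theta> \<Longrightarrow> obC c \<Longrightarrow> obC c' \<Longrightarrow> W \<in> RL A x c c' \<Longrightarrow> \<theta> c c' W \<in> RL A y c c'"
  unfolding two_cell_def by blast

lemma two_cell_dimap:
  "two_cell A x y \<theta> \<Longrightarrow> obC c \<Longrightarrow> obC c' \<Longrightarrow> obC d \<Longrightarrow> obC d' \<Longrightarrow>
   p \<in> hom (Ccat A) d c \<Longrightarrow> q \<in> hom (Ccat A) c' d' \<Longrightarrow> W \<in> RL A x c c' \<Longrightarrow>
   \<theta> d d' (rl_dimap A x d d' p q W) = rl_dimap A y d d' p q (\<theta> c c' W)"
  unfolding two_cell_def by blast

lemma two_cell_str:
  "two_cell A x y \<theta> \<Longrightarrow> obM m \<Longrightarrow> obC c \<Longrightarrow> obC c' \<Longrightarrow> W \<in> RL A x c c' \<Longrightarrow>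
   \<theta> (actO A m c) (actO A m c') (rl_str A x m c c' W) = rl_str A y m c c' (\<theta> c c' W)"
  unfolding two_cell_def by blast

lemma idopt_rep: "obC x \<Longrightarrow> (munit A, cinv (Ccat A) (alam A x), alam A x) \<in> opt_reps A x x x x"
  unfolding opt_reps_iff using lam_inv[of x] lam_ar[of x] by (simp add: actg_simps)

lemma idopt_RL: "obC x \<Longrightarrow> idopt A x \<in> RL A x x x"
  unfolding idopt_def by (rule RL_cls[OF idopt_rep])

lemma idopt_mem: "obC x \<Longrightarrow> (munit A, cinv (Ccat A) (alam A x), alam A x) \<in> idopt A x"
  unfolding idopt_def by (rule opt_cls_self[OF idopt_rep])

lemma outside_idopt: "obC x \<Longrightarrow> outside A (idopt A x) = idC x"
  using outside_cls[OF idopt_RL idopt_mem] lam_inv by simp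

lemma rl_str_idopt:
  assumes x: "obC x" and n: "obM n"
  shows "rl_str A x n x x (idopt A x) =
    cls (opt_rel A (actO A n x) (actO A n x) x x) (n, idC (actO A n x), idC (actO A n x))"
proof -
  note li = lam_inv[OF x] and la = lam_ar[OF x] and ra = rho_ar[OF n]
  let ?X = "act n (cinv (Ccat A) (alam A x)) \<cdot> asc_inv n (munit A) x"
  have s: "rl_str A x n x x (idopt A x) = cls (opt_rel A (actO A n x) (actO A n x) x x)
     (tenO A n (munit A), ?X, wh (mrho A n) x)"
    using rl_str_cls[OF idopt_RL[OF x] idopt_mem[OF x] x n] asc_rho[OF n x] by simp
  have "act n (cinv (Ccat A) (alam A x)) \<cdot> act n (alam A x) = idC (actO A n x)"
    using act_comp[of n "cinv (Ccat A) (alam A x)" "alam A x"] li la n x by (simp add: actg_simps)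
  then have X: "?X \<cdot> wh (mrho A n) x = idC (actO A n x)"
    unfolding asc_rho[OF n x, symmetric] using li la n x by (simp add: actg_simps)
  have "((n, ?X \<cdot> wh (mrho A n) x, idC (actO A n x)),
         (tenO A n (munit A), ?X, wh (mrho A n) x \<cdot> idC (actO A n x)))
        \<in> opt_rel A (actO A n x) (actO A n x) x x"
    by (rule opt_rel_slide) (use li la ra n x in \<open>simp_all add: actg_simps\<close>)
  then show ?thesis
    unfolding s opt_rel_def using X ra n x by (simp add: actg_simps cls_eqI)
qed

lemma RL_eq_dimap_str_idopt:
  assumes W: "W \<in> RL A x c c'" and t: "(n,f,g) \<in> W" and x: "obC x"
  shows "W = rl_dimap A x c c' f g (rl_str A x n x x (idopt A x))"
proof -
  note ty = RL_reps[OF W t]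
  have rep: "(n, idC (actO A n x), idC (actO A n x)) \<in> opt_reps A (actO A n x) (actO A n x) x x"
    unfolding opt_reps_iff using ty x by (simp add: actg_simps)
  have "rl_dimap A x c c' f g (rl_str A x n x x (idopt A x)) =
      cls (opt_rel A c c' x x) (n, f \<cdot> idC (actO A n x), idC (actO A n x) \<cdot> g)"
    unfolding rl_str_idopt[OF x ty(1)]
    by (rule rl_dimap_cls[OF RL_cls[OF rep] opt_cls_self[OF rep] x]) (use ty in simp_all)
  also have "\<dots> = W"
    using RL_eq_cls[OF W t] ty x by (simp add: actg_simps)
  finally show ?thesis by simp
qed

lemma glue_dimap_balanced:
  assumes U: "U \<in> RL A y c d" and V: "V \<in> RL A y d' c'" and y: "obC y"
    and p: "arC p" "dC p = d" "cC p = d'"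
  shows "glue A y c d' c' (rl_dimap A y c d' (idC c) p U) V =
         glue A y c d c' U (rl_dimap A y d c' p (idC c') V)"
proof -
  obtain n1 f g where t1: "(n1,f,g) \<in> U" using RL_obtain_rep[OF U] .
  obtain n2 h k where t2: "(n2,h,k) \<in> V" using RL_obtain_rep[OF V] .
  note ty1 = RL_reps[OF U t1] and ty2 = RL_reps[OF V t2]
  have d: "obC d" "obC d'" using p Cob by auto
  have c: "obC c" "obC c'" using ty1(2,3) ty2(5,7) Cob by auto
  have r1: "(n1, f, g \<cdot> p) \<in> opt_reps A c d' y y" and r2: "(n2, p \<cdot> h, k) \<in> opt_reps A d c' y y"
    unfolding opt_reps_iff using ty1 ty2 p by (simp_all add: actg_simps)
  have "rl_dimap A y c d' (idC c) p U = cls (opt_rel A c d' y y) (n1, f, g \<cdot> p)"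
    using rl_dimap_cls[OF U t1 y, of "idC c" c p d'] ty1 p c by (simp add: actg_simps)
  moreover have "rl_dimap A y d c' p (idC c') V = cls (opt_rel A d c' y y) (n2, p \<cdot> h, k)"
    using rl_dimap_cls[OF V t2 y, of p d "idC c'" c'] ty2 p c by (simp add: actg_simps)
  moreover have "((n1, f, d', g \<cdot> p, n2, h, k), (n1, f, d, g, n2, p \<cdot> h, k)) \<in> rel4 A y c c'"
    by (rule rel4_slide_mid) (use ty1 ty2 p y in simp_all)
  ultimately show ?thesis
    using glue_cls[OF RL_cls[OF r1] V opt_cls_self[OF r1] t2 y d(2)]
      glue_cls[OF U RL_cls[OF r2] t1 opt_cls_self[OF r2] y d(1)]
    unfolding rel4_def by (simp add: cls_eqI)
qed

lemma glue_two_cell_slide_mid: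
  assumes tc: "two_cell A x y \<theta>" and x: "obC x" and y: "obC y"
    and ty: "obM n1" "arC f" "dC f = c" "cC f = actO A n1 x" "arC g" "dC g = actO A n1 x" "cC g = d"
      "obM n2" "arC h" "dC h = d'" "cC h = actO A n2 x" "arC k" "dC k = actO A n2 x" "cC k = c'"
    and p: "arC p" "dC p = d" "cC p = d'"
  shows "glue A y c d' c' (\<theta> c d' (cls (opt_rel A c d' x x) (n1, f, g \<cdot> p)))
                          (\<theta> d' c' (cls (opt_rel A d' c' x x) (n2, h, k))) =
         glue A y c d c' (\<theta> c d (cls (opt_rel A c d x x) (n1, f, g)))
                         (\<theta> d c' (cls (opt_rel A d c' x x) (n2, p \<cdot> h, k)))"
proof -
  have r1: "(n1,f,g) \<in> opt_reps A c d x x" and r2: "(n2,h,k) \<in> opt_reps A d' c' x x"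
    unfolding opt_reps_iff using ty by simp_all
  note U = RL_cls[OF r1] and V = RL_cls[OF r2]
  have ob: "obC c" "obC c'" "obC d" "obC d'" using ty p Cob by auto
  have "cls (opt_rel A c d' x x) (n1, f, g \<cdot> p) = rl_dimap A x c d' (idC c) p (cls (opt_rel A c d x x) (n1,f,g))"
    using rl_dimap_cls[OF U opt_cls_self[OF r1] x, of "idC c" c p d'] ty p ob by (simp add: actg_simps)
  moreover have "cls (opt_rel A d c' x x) (n2, p \<cdot> h, k) = rl_dimap A x d c' p (idC c') (cls (opt_rel A d' c' x x) (n2,h,k))"
    using rl_dimap_cls[OF V opt_cls_self[OF r2] x, of p d "idC c'" c'] ty p ob by (simp add: actg_simps)
  ultimately show ?thesis
    using two_cell_dimap[OF tc ob(1,3,1,4) _ _ U, of "idC c" p]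
      two_cell_dimap[OF tc ob(4,2,3,2) _ _ V, of p "idC c'"]
      glue_dimap_balanced[OF two_cell_RL[OF tc ob(1,3) U] two_cell_RL[OF tc ob(4,2) V] y]
      p ob by (simp add: hom_iff actg_simps)
qed

lemma hcomp2_cls:
  assumes tc: "two_cell A x y \<theta>" and x: "obC x" and y: "obC y"
    and z: "(n1,f,d,g,n2,h,k) \<in> rep4 A x c c'"
  shows "hcomp2 A x y \<theta> c c' (cls (rel4 A x c c') (n1,f,d,g,n2,h,k)) =
    glue A y c d c' (\<theta> c d (cls (opt_rel A c d x x) (n1,f,g))) (\<theta> d c' (cls (opt_rel A d c' x x) (n2,h,k)))"
proof -
  define G where "G = (\<lambda>(n1,f,d,g,n2,h,k). glue A y c d c' (\<theta> c d (cls (opt_rel A c d x x) (n1,f,g)))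
                      (\<theta> d c' (cls (opt_rel A d c' x x) (n2,h,k))))"
  have "hcomp2 A x y \<theta> c c' (cls (rel4 A x c c') (n1,f,d,g,n2,h,k)) =
      (\<Union>s\<in>cls (genrel (rep4 A x c c') (step4 A x)) (n1,f,d,g,n2,h,k). G s)"
    unfolding hcomp2_def G_def rel4_def ..
  also have "\<dots> = G (n1,f,d,g,n2,h,k)"
  proof (rule UN_cls_eq[OF _ z])
    fix a b assume a: "a \<in> rep4 A x c c'" and b: "b \<in> rep4 A x c c'" and st: "(a,b) \<in> step4 A x"
    from st show "G a = G b"
    proof (cases rule: step4E)
      case (left m1 n1 u f d g n2 h k)
      have "((m1, f \<cdot> wh u x, g), (n1, f, wh u x \<cdot> g)) \<in> opt_rel A c d x x"
        by (rule opt_rel_slide) (use a b left x in \<open>simp_all add: rep4_iff\<close>)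
      then show ?thesis unfolding left G_def opt_rel_def by (simp add: cls_eqI)
    next
      case (right n1 f d g m2 n2 u h k)
      have "((m2, h \<cdot> wh u x, k), (n2, h, wh u x \<cdot> k)) \<in> opt_rel A d c' x x"
        by (rule opt_rel_slide) (use a b right x in \<open>simp_all add: rep4_iff\<close>)
      then show ?thesis unfolding right G_def opt_rel_def by (simp add: cls_eqI)
    next
      case (mid n1 f d d' g p n2 h k)
      have "obM n1" "arC f" "dC f = c" "cC f = actO A n1 x" "arC g" "dC g = actO A n1 x" "cC g = d"
        "obM n2" "arC h" "dC h = d'" "cC h = actO A n2 x" "arC k" "dC k = actO A n2 x" "cC k = c'"
        using a b mid(3-5) unfolding mid(1,2) rep4_iff by simp_all
      from glue_two_cell_slide_mid[OF tc x y this mid(3-5)] show ?thesis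
        unfolding mid(1,2) G_def by simp
    qed
  qed
  finally show ?thesis unfolding G_def by simp
qed

definition compose_mid :: "('mo,'a,'o) rep4 \<Rightarrow> 'mo \<times> 'mo \<times> 'a \<times> 'a \<times> 'a" where
  "compose_mid z = (case z of (n1,f,d,g,n2,h,k) \<Rightarrow> (n1, n2, f, g \<cdot> h, k))"

lemma compose_mid_rel:
  assumes r: "(z,z') \<in> rel4 A y x x" and y: "obC y"
  shows "(compose_mid z, compose_mid z') \<in> opt2_rel A x y"
  unfolding opt2_rel_def
proof (rule genrel_map[OF _ _ r[unfolded rel4_def]])
  fix a assume a: "a \<in> rep4 A y x x"
  obtain n1 f d g n2 h k where e: "a = (n1,f,d,g,n2,h,k)" by (cases a) blast
  show "compose_mid a \<in> opt2_reps A x y"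
    using a unfolding e compose_mid_def rep4_iff by (simp add: opt2_reps_iff actg_simps)
next
  fix a b assume a: "a \<in> rep4 A y x x" and b: "b \<in> rep4 A y x x" and ab: "(a,b) \<in> step4 A y"
  from ab show "(compose_mid a, compose_mid b) \<in> genrel (opt2_reps A x y) (opt2_step A x y)"
  proof (cases rule: step4E)
    case (left m1 n1 u f d g n2 h k)
    have "((m1, n2, f \<cdot> wh u y, g \<cdot> h, k), (n1, n2, f, wh u y \<cdot> (g \<cdot> h), k)) \<in> opt2_rel A x y"
      by (rule opt2_rel_slide_left) (use a b left y in \<open>simp_all add: rep4_iff actg_simps\<close>)
    then show ?thesis
      using a b y left(3-5) unfolding left(1,2) compose_mid_def opt2_rel_def rep4_iff by (simp add: actg_simps)
  next
    case (mid n1 f d d' g p n2 h k)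
    have "(compose_mid a, compose_mid a) \<in> opt2_rel A x y"
      by (rule opt2_rel_refl) (use a y in \<open>simp add: mid compose_mid_def rep4_iff opt2_reps_iff actg_simps\<close>)
    then show ?thesis
      using a b y mid(3-5) unfolding mid(1,2) compose_mid_def opt2_rel_def rep4_iff by (simp add: actg_simps)
  next
    case (right n1 f d g m2 n2 u h k)
    have "((n1, m2, f, (g \<cdot> h) \<cdot> wh u y, k), (n1, n2, f, g \<cdot> h, wh u y \<cdot> k)) \<in> opt2_rel A x y"
      by (rule opt2_rel_slide_right) (use a b right y in \<open>simp_all add: rep4_iff actg_simps\<close>)
    then show ?thesis
      using a b y right(3-5) unfolding right(1,2) compose_mid_def opt2_rel_def rep4_iff by (simp add: actg_simps)
  qed
qed

definition opt2_whisker :: "'mo \<Rightarrow> 'a \<Rightarrow> 'a \<Rightarrow> 'o \<Rightarrow> 'mo \<times> 'mo \<times> 'a \<times> 'a \<times> 'a \<Rightarrow> ('mo,'a,'o) rep4" where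
  "opt2_whisker n f g y w = (case w of (m1,m2,\<alpha>,\<gamma>,\<beta>) \<Rightarrow>
     (tenO A n m1, f \<cdot> (act n \<alpha> \<cdot> asc_inv n m1 y), actO A (tenO A n m1) y, idC (actO A (tenO A n m1) y),
      tenO A n m2, asc n m1 y \<cdot> (act n \<gamma> \<cdot> asc_inv n m2 y), asc n m2 y \<cdot> (act n \<beta> \<cdot> g)))"

lemma opt2_whisker_slide_left:
  assumes ty: "obM n" "arC f" "dC f = c" "cC f = actO A n x" "arC g" "dC g = actO A n x" "cC g = c'"
    and x: "obC x" and y: "obC y" and h: "arM h" "dM h = n1" "cM h = m1"
    and tt: "obM m2" "arC \<alpha>" "dC \<alpha> = x" "cC \<alpha> = actO A n1 y" "arC \<gamma>" "dC \<gamma> = actO A m1 y"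
      "cC \<gamma> = actO A m2 y" "arC \<beta>" "dC \<beta> = actO A m2 y" "cC \<beta> = x"
  shows "(opt2_whisker n f g y (m1, m2, \<alpha> \<cdot> wh h y, \<gamma>, \<beta>), opt2_whisker n f g y (n1, m2, \<alpha>, wh h y \<cdot> \<gamma>, \<beta>))
    \<in> rel4 A y c c'"
proof -
  have ob: "obM m1" "obM n1" using h Mob by auto
  let ?u = "tenA A (cid (Mcat A) n) h"
  let ?F = "f \<cdot> (act n \<alpha> \<cdot> asc_inv n n1 y)"
  let ?D1 = "actO A (tenO A n m1) y" and ?D2 = "actO A (tenO A n n1) y"
  let ?H = "asc n m1 y \<cdot> (act n \<gamma> \<cdot> asc_inv n m2 y)" and ?K = "asc n m2 y \<cdot> (act n \<beta> \<cdot> g)"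
  have "((tenO A n m1, ?F \<cdot> wh ?u y, ?D1, idC ?D1, tenO A n m2, ?H, ?K),
         (tenO A n n1, ?F, ?D1, wh ?u y \<cdot> idC ?D1, tenO A n m2, ?H, ?K)) \<in> rel4 A y c c'"
    by (rule rel4_slide_left) (use ob tt ty x y h in \<open>simp_all add: actg_simps\<close>)
  moreover have "((tenO A n n1, ?F, ?D1, idC ?D2 \<cdot> wh ?u y, tenO A n m2, ?H, ?K),
         (tenO A n n1, ?F, ?D2, idC ?D2, tenO A n m2, wh ?u y \<cdot> ?H, ?K)) \<in> rel4 A y c c'"
    by (rule rel4_slide_mid) (use ob tt ty x y h in \<open>simp_all add: actg_simps\<close>)
  ultimately show ?thesis
    using ob tt ty x y h unfolding opt2_whisker_def
    by (simp add: actg_simps natural_simps) (meson rel4_trans)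
qed

lemma opt2_whisker_slide_right:
  assumes ty: "obM n" "arC f" "dC f = c" "cC f = actO A n x" "arC g" "dC g = actO A n x" "cC g = c'"
    and x: "obC x" and y: "obC y" and h: "arM h" "dM h = n2" "cM h = m2"
    and tt: "obM m1" "arC \<alpha>" "dC \<alpha> = x" "cC \<alpha> = actO A m1 y" "arC \<gamma>" "dC \<gamma> = actO A m1 y"
      "cC \<gamma> = actO A n2 y" "arC \<beta>" "dC \<beta> = actO A m2 y" "cC \<beta> = x"
  shows "(opt2_whisker n f g y (m1, m2, \<alpha>, \<gamma> \<cdot> wh h y, \<beta>), opt2_whisker n f g y (m1, n2, \<alpha>, \<gamma>, wh h y \<cdot> \<beta>))
    \<in> rel4 A y c c'"
proof -
  have ob: "obM m2" "obM n2" using h Mob by auto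
  let ?u = "tenA A (cid (Mcat A) n) h"
  let ?F = "f \<cdot> (act n \<alpha> \<cdot> asc_inv n m1 y)" and ?D1 = "actO A (tenO A n m1) y"
  let ?H = "asc n m1 y \<cdot> (act n \<gamma> \<cdot> asc_inv n n2 y)" and ?K = "asc n m2 y \<cdot> (act n \<beta> \<cdot> g)"
  have "((tenO A n m1, ?F, ?D1, idC ?D1, tenO A n m2, ?H \<cdot> wh ?u y, ?K),
         (tenO A n m1, ?F, ?D1, idC ?D1, tenO A n n2, ?H, wh ?u y \<cdot> ?K)) \<in> rel4 A y c c'"
    by (rule rel4_slide_right) (use ob tt ty x y h in \<open>simp_all add: actg_simps\<close>)
  then show ?thesis
    using ob tt ty x y h unfolding opt2_whisker_def by (simp add: actg_simps natural_simps)
qed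

lemma opt2_whisker_rel:
  assumes r: "(w,w') \<in> opt2_rel A x y"
    and ty: "obM n" "arC f" "dC f = c" "cC f = actO A n x" "arC g" "dC g = actO A n x" "cC g = c'"
    and x: "obC x" and y: "obC y"
  shows "(opt2_whisker n f g y w, opt2_whisker n f g y w') \<in> rel4 A y c c'"
  unfolding rel4_def
proof (rule genrel_map[OF _ _ r[unfolded opt2_rel_def]])
  fix a assume a: "a \<in> opt2_reps A x y"
  obtain m1 m2 \<alpha> \<gamma> \<beta> where e: "a = (m1,m2,\<alpha>,\<gamma>,\<beta>)" by (cases a) blast
  show "opt2_whisker n f g y a \<in> rep4 A y c c'"
    using a ty x y unfolding e opt2_whisker_def opt2_reps_iff by (simp add: rep4_iff actg_simps)
next
  fix a b assume a: "a \<in> opt2_reps A x y" and b: "b \<in> opt2_reps A x y" and ab: "(a,b) \<in> opt2_step A x y"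
  from ab show "(opt2_whisker n f g y a, opt2_whisker n f g y b) \<in> genrel (rep4 A y c c') (step4 A y)"
  proof (cases rule: opt2_stepE)
    case (left m1 n1 m2 h \<alpha> \<gamma> \<beta>)
    have "obM m2" "arC \<alpha>" "dC \<alpha> = x" "cC \<alpha> = actO A n1 y" "arC \<gamma>" "dC \<gamma> = actO A m1 y"
      "cC \<gamma> = actO A m2 y" "arC \<beta>" "dC \<beta> = actO A m2 y" "cC \<beta> = x"
      using a b left(3-5) y unfolding left(1,2) opt2_reps_iff by (simp_all add: actg_simps)
    from opt2_whisker_slide_left[OF ty x y left(3-5) this] show ?thesis
      unfolding left(1,2) rel4_def .
  next
    case (right m1 m2 n2 h \<alpha> \<gamma> \<beta>)
    have "obM m1" "arC \<alpha>" "dC \<alpha> = x" "cC \<alpha> = actO A m1 y" "arC \<gamma>" "dC \<gamma> = actO A m1 y"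
      "cC \<gamma> = actO A n2 y" "arC \<beta>" "dC \<beta> = actO A m2 y" "cC \<beta> = x"
      using a b right(3-5) y unfolding right(1,2) opt2_reps_iff by (simp_all add: actg_simps)
    from opt2_whisker_slide_right[OF ty x y right(3-5) this] show ?thesis
      unfolding right(1,2) rel4_def .
  qed
qed

end

section \<open>The two-cell of an optic\<close>

locale optic_two_cell = actegory_setting A for A :: "('mo,'m,'o,'a) actg" +
  fixes x y :: 'o and l :: "('mo \<times> 'a \<times> 'a) set"
    and \<theta> :: "'o \<Rightarrow> 'o \<Rightarrow> ('mo \<times> 'a \<times> 'a) set \<Rightarrow> ('mo \<times> 'a \<times> 'a) set"
    and m :: 'mo and \<alpha> \<beta> :: 'a
  assumes x: "obC x" and y: "obC y" and l: "l \<in> Optic A x x y y"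
    and two_cell: "two_cell A x y \<theta>" and theta_idopt: "\<theta> x x (idopt A x) = l"
    and rep: "(m, \<alpha>, \<beta>) \<in> l"
begin

lemma l_RL: "l \<in> RL A y x x"
  using l unfolding RL_def .

lemmas rep_typing = RL_reps[OF l_RL rep]

lemma theta_cls:
  assumes W: "W \<in> RL A x c c'" and t: "(n,f,g) \<in> W" and c: "obC c" and c': "obC c'"
  shows "\<theta> c c' W = cls (opt_rel A c c' y y)
    (tenO A n m, f \<cdot> (act n \<alpha> \<cdot> asc_inv n m y), asc n m y \<cdot> (act n \<beta> \<cdot> g))"
proof -
  note ty = RL_reps[OF W t] and ml = rep_typing
  let ?N = "actO A n x" and ?V = "rl_str A x n x x (idopt A x)"
  let ?s = "(tenO A n m, act n \<alpha> \<cdot> asc_inv n m y, asc n m y \<cdot> act n \<beta>)"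
  have N: "obC ?N" using ty x by (simp add: actg_simps)
  have V: "?V \<in> RL A x ?N ?N"
    unfolding rl_str_idopt[OF x ty(1)] by (rule RL_cls) (use ty x in \<open>simp add: opt_reps_iff actg_simps\<close>)
  have s: "?s \<in> opt_reps A ?N ?N y y"
    unfolding opt_reps_iff using ty ml x y by (simp add: actg_simps)
  have "\<theta> c c' W = \<theta> c c' (rl_dimap A x c c' f g ?V)"
    by (rule arg_cong[OF RL_eq_dimap_str_idopt[OF W t x]])
  also have "\<dots> = rl_dimap A y c c' f g (\<theta> ?N ?N ?V)"
    by (rule two_cell_dimap[OF two_cell N N c c' _ _ V]) (use ty in \<open>simp_all add: hom_iff\<close>)
  also have "\<dots> = rl_dimap A y c c' f g (rl_str A y n x x l)"
    using two_cell_str[OF two_cell ty(1) x x idopt_RL[OF x]] theta_idopt by simp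
  also have "\<dots> = rl_dimap A y c c' f g (cls (opt_rel A ?N ?N y y) ?s)"
    unfolding rl_str_cls[OF l_RL rep y ty(1)] ..
  also have "\<dots> = cls (opt_rel A c c' y y)
      (tenO A n m, f \<cdot> (act n \<alpha> \<cdot> asc_inv n m y), (asc n m y \<cdot> act n \<beta>) \<cdot> g)"
    by (rule rl_dimap_cls[OF RL_cls[OF s] opt_cls_self[OF s] y]) (use ty in simp_all)
  finally show ?thesis using ty ml x y by (simp add: actg_simps)
qed

lemma theta_dimap_idopt:
  assumes d: "obC d" "obC d'" and p: "arC p" "dC p = d" "cC p = x" and q: "arC q" "dC q = x" "cC q = d'"
  shows "\<theta> d d' (rl_dimap A x d d' p q (idopt A x)) = cls (opt_rel A d d' y y) (m, p \<cdot> \<alpha>, \<beta> \<cdot> q)"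
  using two_cell_dimap[OF two_cell x x d _ _ idopt_RL[OF x], of p q] theta_idopt
    rl_dimap_cls[OF l_RL rep y p q] p q by (simp add: hom_iff)

lemma outside_eq_id_of_counit:
  assumes "outside A (\<theta> x x (idopt A x)) = outside A (idopt A x)"
  shows "outside A l = idC x"
  using assms theta_idopt outside_idopt[OF x] by simp

lemma outside_theta_eq:
  assumes counit: "outside A l = idC x" and W: "W \<in> RL A x c c'" and c: "obC c" and c': "obC c'"
  shows "outside A (\<theta> c c' W) = outside A W"
proof -
  obtain n f g where t: "(n,f,g) \<in> W" using RL_obtain_rep[OF W] .
  note ty = RL_reps[OF W t] and ml = rep_typing
  let ?s = "(tenO A n m, f \<cdot> (act n \<alpha> \<cdot> asc_inv n m y), asc n m y \<cdot> (act n \<beta> \<cdot> g))"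
  have s: "?s \<in> opt_reps A c c' y y"
    unfolding opt_reps_iff using ty ml x y by (simp add: actg_simps)
  have "\<alpha> \<cdot> \<beta> = idC x" using outside_cls[OF l_RL rep y] counit by simp
  then have "act n \<alpha> \<cdot> act n \<beta> = idC (actO A n x)"
    using act_comp[of n \<alpha> \<beta>] ty ml x by (simp add: actg_simps)
  then have "act n \<alpha> \<cdot> (act n \<beta> \<cdot> g) = g"
    using Cassoc[of "act n \<alpha>" "act n \<beta>" g] ty ml x y by (simp add: actg_simps)
  then show ?thesis
    unfolding theta_cls[OF W t c c'] outside_cls[OF RL_cls[OF s] opt_cls_self[OF s] y] outside_cls[OF W t x]
    using ty ml x y by (simp add: actg_simps)
qed

lemma hcomp2_dbl_cls:
  assumes W: "W \<in> RL A x c c'" and t: "(n,f,g) \<in> W" and c: "obC c" and c': "obC c'"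
  shows "hcomp2 A x y \<theta> c c' (dbl A x c c' W) = cls (rel4 A y c c')
    (tenO A n m, f \<cdot> (act n \<alpha> \<cdot> asc_inv n m y), actO A n x, asc n m y \<cdot> act n \<beta>,
     tenO A n m, act n \<alpha> \<cdot> asc_inv n m y, asc n m y \<cdot> (act n \<beta> \<cdot> g))"
proof -
  note ty = RL_reps[OF W t] and ml = rep_typing
  let ?N = "actO A n x"
  have N: "obC ?N" using ty x by (simp add: actg_simps)
  have z: "(n, f, ?N, idC ?N, n, idC ?N, g) \<in> rep4 A x c c'"
    unfolding rep4_iff using ty x by (simp add: actg_simps)
  have r1: "(n, f, idC ?N) \<in> opt_reps A c ?N x x" and r2: "(n, idC ?N, g) \<in> opt_reps A ?N c' x x"
    unfolding opt_reps_iff using ty x by (simp_all add: actg_simps)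
  let ?s1 = "(tenO A n m, f \<cdot> (act n \<alpha> \<cdot> asc_inv n m y), asc n m y \<cdot> (act n \<beta> \<cdot> idC ?N))"
  let ?s2 = "(tenO A n m, idC ?N \<cdot> (act n \<alpha> \<cdot> asc_inv n m y), asc n m y \<cdot> (act n \<beta> \<cdot> g))"
  have s1: "?s1 \<in> opt_reps A c ?N y y" and s2: "?s2 \<in> opt_reps A ?N c' y y"
    unfolding opt_reps_iff using ty ml x y by (simp_all add: actg_simps)
  have "hcomp2 A x y \<theta> c c' (dbl A x c c' W) = glue A y c ?N c'
      (\<theta> c ?N (cls (opt_rel A c ?N x x) (n, f, idC ?N))) (\<theta> ?N c' (cls (opt_rel A ?N c' x x) (n, idC ?N, g)))"
    unfolding dbl_cls[OF W t x] by (rule hcomp2_cls[OF two_cell x y z])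
  also have "\<dots> = glue A y c ?N c' (cls (opt_rel A c ?N y y) ?s1) (cls (opt_rel A ?N c' y y) ?s2)"
    unfolding theta_cls[OF RL_cls[OF r1] opt_cls_self[OF r1] c N]
      theta_cls[OF RL_cls[OF r2] opt_cls_self[OF r2] N c'] ..
  also have "\<dots> = cls (rel4 A y c c')
      (tenO A n m, f \<cdot> (act n \<alpha> \<cdot> asc_inv n m y), ?N, asc n m y \<cdot> (act n \<beta> \<cdot> idC ?N),
       tenO A n m, idC ?N \<cdot> (act n \<alpha> \<cdot> asc_inv n m y), asc n m y \<cdot> (act n \<beta> \<cdot> g))"
    by (rule glue_cls[OF RL_cls[OF s1] RL_cls[OF s2] opt_cls_self[OF s1] opt_cls_self[OF s2] y N])
  finally show ?thesis using ty ml x y by (simp add: actg_simps)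
qed

lemma dbl_theta_eq:
  assumes once_twice: "once A x y l = twice A x y l"
    and W: "W \<in> RL A x c c'" and c: "obC c" and c': "obC c'"
  shows "dbl A y c c' (\<theta> c c' W) = hcomp2 A x y \<theta> c c' (dbl A x c c' W)"
proof -
  obtain n f g where t: "(n,f,g) \<in> W" using RL_obtain_rep[OF W] .
  note ty = RL_reps[OF W t] and ml = rep_typing
  let ?F = "f \<cdot> (act n \<alpha> \<cdot> asc_inv n m y)" and ?G = "asc n m y \<cdot> (act n \<beta> \<cdot> g)"
  let ?P = "actO A (tenO A n m) y" and ?nm = "tenO A n m"
  let ?L = "(?nm, ?F, ?P, idC ?P, ?nm, idC ?P, ?G)"
  have s: "(?nm, ?F, ?G) \<in> opt_reps A c c' y y"
    unfolding opt_reps_iff using ty ml x y by (simp add: actg_simps)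
  have lhs: "dbl A y c c' (\<theta> c c' W) = cls (rel4 A y c c') ?L"
    unfolding theta_cls[OF W t c c'] by (rule dbl_cls[OF RL_cls[OF s] opt_cls_self[OF s] y])
  have "((m, m, \<alpha>, idC (actO A m y), \<beta>), (m, m, \<alpha>, \<beta> \<cdot> \<alpha>, \<beta>)) \<in> opt2_rel A x y"
    using once_twice once_eq_twice_iff[OF l rep y] by simp
  from opt2_whisker_rel[OF this ty x y]
  have "(?L, (?nm, ?F, ?P, idC ?P, ?nm, asc n m y \<cdot> (act n \<beta> \<cdot> (act n \<alpha> \<cdot> asc_inv n m y)), ?G))
        \<in> rel4 A y c c'"
    using act_comp[of n \<beta> \<alpha>] ty ml x y unfolding opt2_whisker_def by (simp add: actg_simps)
  moreover have "((?nm, ?F, actO A n x, idC ?P \<cdot> (asc n m y \<cdot> act n \<beta>), ?nm, act n \<alpha> \<cdot> asc_inv n m y, ?G),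
      (?nm, ?F, ?P, idC ?P, ?nm, (asc n m y \<cdot> act n \<beta>) \<cdot> (act n \<alpha> \<cdot> asc_inv n m y), ?G)) \<in> rel4 A y c c'"
    by (rule rel4_slide_mid) (use ty ml x y in \<open>simp_all add: actg_simps\<close>)
  ultimately have "((?nm, ?F, actO A n x, asc n m y \<cdot> act n \<beta>, ?nm, act n \<alpha> \<cdot> asc_inv n m y, ?G), ?L)
      \<in> rel4 A y c c'"
    using ty ml x y by (simp add: actg_simps) (meson rel4_sym rel4_trans)
  then show ?thesis
    unfolding lhs hcomp2_dbl_cls[OF W t c c'] rel4_def by (rule cls_eqI[symmetric])
qed

lemma hcomp2_dbl_idopt:
  "hcomp2 A x y \<theta> x x (dbl A x x x (idopt A x)) = cls (rel4 A y x x)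
    (m, \<alpha>, actO A (munit A) x, \<beta> \<cdot> cinv (Ccat A) (alam A x), m, alam A x \<cdot> \<alpha>, \<beta>)"
proof -
  let ?lam = "alam A x" and ?li = "cinv (Ccat A) (alam A x)" and ?I = "munit A"
  let ?Ix = "actO A ?I x"
  note li = lam_inv[OF x] and la = lam_ar[OF x] and ml = rep_typing
  have Ix: "obC ?Ix" using x by (simp add: actg_simps)
  have z: "(?I, ?li, ?Ix, idC ?Ix, ?I, idC ?Ix, ?lam) \<in> rep4 A x x x"
    unfolding rep4_iff using x li la by (simp add: actg_simps)
  have "cls (opt_rel A x ?Ix x x) (?I, ?li, idC ?Ix) = rl_dimap A x x ?Ix (idC x) ?li (idopt A x)"
    using rl_dimap_cls[OF idopt_RL[OF x] idopt_mem[OF x] x, of "idC x" x ?li ?Ix] li la x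
    by (simp add: actg_simps)
  then have e1: "\<theta> x ?Ix (cls (opt_rel A x ?Ix x x) (?I, ?li, idC ?Ix)) = cls (opt_rel A x ?Ix y y) (m, \<alpha>, \<beta> \<cdot> ?li)"
    using theta_dimap_idopt[of x ?Ix "idC x" ?li] li x Ix ml by (simp add: actg_simps)
  have "cls (opt_rel A ?Ix x x x) (?I, idC ?Ix, ?lam) = rl_dimap A x ?Ix x ?lam (idC x) (idopt A x)"
    using rl_dimap_cls[OF idopt_RL[OF x] idopt_mem[OF x] x, of ?lam ?Ix "idC x" x] li la x
    by (simp add: actg_simps)
  then have e2: "\<theta> ?Ix x (cls (opt_rel A ?Ix x x x) (?I, idC ?Ix, ?lam)) = cls (opt_rel A ?Ix x y y) (m, ?lam \<cdot> \<alpha>, \<beta>)"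
    using theta_dimap_idopt[of ?Ix x ?lam "idC x"] la x Ix ml by (simp add: actg_simps)
  have s1: "(m, \<alpha>, \<beta> \<cdot> ?li) \<in> opt_reps A x ?Ix y y" and s2: "(m, ?lam \<cdot> \<alpha>, \<beta>) \<in> opt_reps A ?Ix x y y"
    unfolding opt_reps_iff using ml li la by (simp_all add: actg_simps)
  show ?thesis
    unfolding dbl_cls[OF idopt_RL[OF x] idopt_mem[OF x] x] hcomp2_cls[OF two_cell x y z] e1 e2
    by (rule glue_cls[OF RL_cls[OF s1] RL_cls[OF s2] opt_cls_self[OF s1] opt_cls_self[OF s2] y Ix])
qed

lemma once_eq_twice_of_comult:
  assumes comult: "dbl A y x x (\<theta> x x (idopt A x)) = hcomp2 A x y \<theta> x x (dbl A x x x (idopt A x))"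
  shows "once A x y l = twice A x y l"
proof -
  let ?lam = "alam A x" and ?li = "cinv (Ccat A) (alam A x)" and ?Ix = "actO A (munit A) x"
  let ?my = "actO A m y" and ?z = "(m, \<alpha>, ?Ix, \<beta> \<cdot> ?li, m, ?lam \<cdot> \<alpha>, \<beta>)"
  note li = lam_inv[OF x] and la = lam_ar[OF x] and ml = rep_typing
  have "cls (rel4 A y x x) (m, \<alpha>, ?my, idC ?my, m, idC ?my, \<beta>) = cls (rel4 A y x x) ?z"
    using comult unfolding theta_idopt dbl_cls[OF l_RL rep y] hcomp2_dbl_idopt .
  then have "((m, \<alpha>, ?my, idC ?my, m, idC ?my, \<beta>), ?z) \<in> rel4 A y x x"
    unfolding rel4_def by (rule cls_eqD) (use ml li la x in \<open>simp add: rep4_iff actg_simps\<close>)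
  moreover have "(?z, (m, \<alpha>, x, \<beta>, m, ?li \<cdot> (?lam \<cdot> \<alpha>), \<beta>)) \<in> rel4 A y x x"
    by (rule rel4_slide_mid) (use ml li la x y in \<open>simp_all add: actg_simps\<close>)
  ultimately have "((m, \<alpha>, ?my, idC ?my, m, idC ?my, \<beta>), (m, \<alpha>, x, \<beta>, m, \<alpha>, \<beta>)) \<in> rel4 A y x x"
    using rel4_trans ml x lam_inv_cancel[OF x, of \<alpha>] by simp
  from compose_mid_rel[OF this y]
  have "((m, m, \<alpha>, idC ?my, \<beta>), (m, m, \<alpha>, \<beta> \<cdot> \<alpha>, \<beta>)) \<in> opt2_rel A x y"
    using ml y unfolding compose_mid_def by (simp add: actg_simps)
  then show ?thesis using once_eq_twice_iff[OF l rep y] by simp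
qed

end

theorem mainTheorem9:
  fixes A :: "('mo,'m,'o,'a) actg"
    and x y :: 'o
    and l :: "('mo \<times> 'a \<times> 'a) set"
    and \<theta> :: "'o \<Rightarrow> 'o \<Rightarrow> ('mo \<times> 'a \<times> 'a) set \<Rightarrow> ('mo \<times> 'a \<times> 'a) set"
  assumes "actegory A"
    and "x \<in> cOb (Ccat A)" and "y \<in> cOb (Ccat A)"
    and "l \<in> Optic A x x y y"
    and "two_cell A x y \<theta>"
    and "\<theta> x x (idopt A x) = l"
  shows "((\<forall>c\<in>cOb (Ccat A). \<forall>c'\<in>cOb (Ccat A). \<forall>W\<in>RL A x c c'.
              outside A (\<theta> c c' W) = outside A W) \<and>
          (\<forall>c\<in>cOb (Ccat A). \<forall>c'\<in>cOb (Ccat A). \<forall>W\<in>RL A x c c'.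
              dbl A y c c' (\<theta> c c' W) = hcomp2 A x y \<theta> c c' (dbl A x c c' W)))
     \<longleftrightarrow> (outside A l = cid (Ccat A) x \<and> once A x y l = twice A x y l)"
proof -
  interpret actegory_setting A by (rule actegory_setting.intro[OF assms(1)])
  obtain m \<alpha> \<beta> where "(m, \<alpha>, \<beta>) \<in> l"
    using RL_obtain_rep[of l y x x] assms(4) unfolding RL_def by blast
  then interpret optic_two_cell A x y l \<theta> m \<alpha> \<beta>
    by unfold_locales (use assms in auto)
  show ?thesis
    using outside_eq_id_of_counit once_eq_twice_of_comult outside_theta_eq dbl_theta_eq
      x idopt_RL[OF x] by blast
qed

end
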